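(* The logics $\mathsf{E}$, $\mathsf{M}$, $\mathsf{MC}$, $\mathsf{EN}$, $\mathsf{MN}$, $\mathsf{K}$, $\mathsf{CE}$, $\mathsf{CM}$, $\mathsf{CMC}$, $\mathsf{CEN}$, $\mathsf{CMN}$, $\mathsf{CK}$ and $\mathsf{CKID}$ have the uniform Lyndon interpolation property (ULIP), and hence also the uniform interpolation property (UIP) and the Lyndon interpolation property (LIP).
   Context: Formulas of $\mathcal{L}_\Box$: atoms, $\bot$, $\wedge,\vee,\to$, unary $\Box$; of $\mathcal{L}_\triangleright$: atoms, $\bot$, $\wedge,\vee,\to$, binary $\triangleright$. $\top:=\bot\to\bot$, $\neg A:=A\to\bot$. Modal logics (in $\mathcal{L}_\Box$): $\mathsf{E}$ is the smallest set containing all instances of classical tautologies and closed under modus ponens and the rule: from $\phi\leftrightarrow\psi$ infer $\Box\phi\leftrightarrow\Box\psi$. Axiom schemes: (M) $\Box(\phi\wedge\psi)\to\Box\phi\wedge\Box\psi$; (C) $\Box\phi\wedge\Box\psi\to\Box(\phi\wedge\psi)$; (N) $\Box\top$. $\mathsf{EN}=\mathsf{E}+(N)$, $\mathsf{M}=\mathsf{E}+(M)$, $\mathsf{MN}=\mathsf{M}+(N)$, $\mathsf{MC}=\mathsf{M}+(C)$, $\mathsf{K}=\mathsf{MC}+(N)$. Conditional logics (in $\mathcal{L}_\triangleright$): $\mathsf{CE}$ is the smallest set containing all instances of classical tautologies and closed under modus ponens and the rule: from $\phi_0\leftrightarrow\phi_1$ and $\psi_0\leftrightarrow\psi_1$ infer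 $(\phi_0\triangleright\psi_0)\to(\phi_1\triangleright\psi_1)$. Axiom schemes: (CM) $(\phi\triangleright\psi\wedge\theta)\to(\phi\triangleright\psi)\wedge(\phi\triangleright\theta)$; (CC) $(\phi\triangleright\psi)\wedge(\phi\triangleright\theta)\to(\phi\triangleright\psi\wedge\theta)$; (CN) $\phi\triangleright\top$; (ID) $\phi\triangleright\phi$. $\mathsf{CEN}=\mathsf{CE}+(CN)$, $\mathsf{CM}=\mathsf{CE}+(CM)$, $\mathsf{CMN}=\mathsf{CM}+(CN)$, $\mathsf{CMC}=\mathsf{CM}+(CC)$, $\mathsf{CK}=\mathsf{CMC}+(CN)$, $\mathsf{CKID}=\mathsf{CK}+(ID)$. Positive/negative variables: $V^+(p)=\{p\}$, $V^-(p)=\varnothing$; $V^\pm(\bot)=V^\pm(\top)=\varnothing$; $V^\pm(\phi\odot\psi)=V^\pm(\phi)\cup V^\pm(\psi)$ for $\odot\in\{\wedge,\vee\}$; $V^+(\phi\to\psi)=V^-(\phi)\cup V^+(\psi)$, $V^-(\phi\to\psi)=V^+(\phi)\cup V^-(\psi)$; $V^\pm(\Box\phi)=V^\pm(\phi)$; $V^+(\phi\triangleright\psi)=V^-(\phi)\cup V^+(\psi)$, $V^-(\phi\triangleright\psi)=V^+(\phi)\cup V^-(\psi)$; $V=V^+\cup V^-$. $p^\circ$-free: $p\notin V^\circ(\cdot)$. ULIP for a logic $L$: for every formula $\phi$, atom $p$, $\circ\in\{+,-\}$ there are $p^\circ$-free formulas $\forall^\circ p\,\phi$, $\exists^\circ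 p\,\phi$ with $V^\dagger(\cdot)\subseteq V^\dagger(\phi)$ for both $\dagger\in\{+,-\}$, such that $L\vdash\forall^\circ p\,\phi\to\phi$; for every $p^\circ$-free $\psi$, $L\vdash\psi\to\phi$ implies $L\vdash\psi\to\forall^\circ p\,\phi$; $L\vdash\phi\to\exists^\circ p\,\phi$; for every $p^\circ$-free $\psi$, $L\vdash\phi\to\psi$ implies $L\vdash\exists^\circ p\,\phi\to\psi$. UIP: same with polarities omitted ($p$-free, $V$). LIP: if $L\vdash\phi\to\psi$ there is $\theta$ with $V^\dagger(\theta)\subseteq V^\dagger(\phi)\cap V^\dagger(\psi)$ for both $\dagger$, $L\vdash\phi\to\theta$, $L\vdash\theta\to\psi$. *)

theory Defs
  imports Main
begin

datatype mfm = MAtom nat | MBot | MAnd mfm mfm | MOr mfm mfm | MImp mfm mfm | MBox mfm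

definition MTop :: mfm where "MTop = MImp MBot MBot"
definition MIff :: "mfm \<Rightarrow> mfm \<Rightarrow> mfm" where "MIff a b = MAnd (MImp a b) (MImp b a)"

fun meval :: "(mfm \<Rightarrow> bool) \<Rightarrow> mfm \<Rightarrow> bool" where
  "meval v (MAtom p) = v (MAtom p)"
| "meval v MBot = False"
| "meval v (MAnd a b) = (meval v a \<and> meval v b)"
| "meval v (MOr a b) = (meval v a \<or> meval v b)"
| "meval v (MImp a b) = (meval v a \<longrightarrow> meval v b)"
| "meval v (MBox a) = v (MBox a)"

definition mtaut :: "mfm \<Rightarrow> bool" where "mtaut f = (\<forall>v. meval v f)"

inductive_set mlogic :: "mfm set \<Rightarrow> mfm set" for Ax :: "mfm set" where
  taut: "mtaut f \<Longrightarrow> f \<in> mlogic Ax"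
| ax: "f \<in> Ax \<Longrightarrow> f \<in> mlogic Ax"
| mp: "f \<in> mlogic Ax \<Longrightarrow> MImp f g \<in> mlogic Ax \<Longrightarrow> g \<in> mlogic Ax"
| re: "MIff f g \<in> mlogic Ax \<Longrightarrow> MIff (MBox f) (MBox g) \<in> mlogic Ax"

definition axM :: "mfm set" where
  "axM = {MImp (MBox (MAnd f g)) (MAnd (MBox f) (MBox g)) | f g. True}"
definition axC :: "mfm set" where
  "axC = {MImp (MAnd (MBox f) (MBox g)) (MBox (MAnd f g)) | f g. True}"
definition axN :: "mfm set" where
  "axN = {MBox MTop}"

definition logE :: "mfm set" where "logE = mlogic {}"
definition logEN :: "mfm set" where "logEN = mlogic axN"
definition logM :: "mfm set" where "logM = mlogic axM"
definition logMN :: "mfm set" where "logMN = mlogic (axM \<union> axN)"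
definition logMC :: "mfm set" where "logMC = mlogic (axM \<union> axC)"
definition logK :: "mfm set" where "logK = mlogic (axM \<union> axC \<union> axN)"

text \<open>Polarised variables: mV True = V^+, mV False = V^-.\<close>
fun mV :: "bool \<Rightarrow> mfm \<Rightarrow> nat set" where
  "mV b (MAtom p) = (if b then {p} else {})"
| "mV b MBot = {}"
| "mV b (MAnd f g) = mV b f \<union> mV b g"
| "mV b (MOr f g) = mV b f \<union> mV b g"
| "mV b (MImp f g) = mV (\<not> b) f \<union> mV b g"
| "mV b (MBox f) = mV b f"

definition mVall :: "mfm \<Rightarrow> nat set" where "mVall f = mV True f \<union> mV False f"

datatype cfm = CAtom nat | CBot | CAnd cfm cfm | COr cfm cfm | CImp cfm cfm | Cond cfm cfm

definition CTop :: cfm where "CTop = CImp CBot CBot"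
definition CIff :: "cfm \<Rightarrow> cfm \<Rightarrow> cfm" where "CIff a b = CAnd (CImp a b) (CImp b a)"

fun ceval :: "(cfm \<Rightarrow> bool) \<Rightarrow> cfm \<Rightarrow> bool" where
  "ceval v (CAtom p) = v (CAtom p)"
| "ceval v CBot = False"
| "ceval v (CAnd a b) = (ceval v a \<and> ceval v b)"
| "ceval v (COr a b) = (ceval v a \<or> ceval v b)"
| "ceval v (CImp a b) = (ceval v a \<longrightarrow> ceval v b)"
| "ceval v (Cond a b) = v (Cond a b)"

definition ctaut :: "cfm \<Rightarrow> bool" where "ctaut f = (\<forall>v. ceval v f)"

inductive_set clogic :: "cfm set \<Rightarrow> cfm set" for Ax :: "cfm set" where
  taut: "ctaut f \<Longrightarrow> f \<in> clogic Ax"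
| ax: "f \<in> Ax \<Longrightarrow> f \<in> clogic Ax"
| mp: "f \<in> clogic Ax \<Longrightarrow> CImp f g \<in> clogic Ax \<Longrightarrow> g \<in> clogic Ax"
| re: "CIff f0 f1 \<in> clogic Ax \<Longrightarrow> CIff g0 g1 \<in> clogic Ax \<Longrightarrow>
       CImp (Cond f0 g0) (Cond f1 g1) \<in> clogic Ax"

definition axCM :: "cfm set" where
  "axCM = {CImp (Cond f (CAnd g h)) (CAnd (Cond f g) (Cond f h)) | f g h. True}"
definition axCC :: "cfm set" where
  "axCC = {CImp (CAnd (Cond f g) (Cond f h)) (Cond f (CAnd g h)) | f g h. True}"
definition axCN :: "cfm set" where
  "axCN = {Cond f CTop | f. True}"
definition axID :: "cfm set" where
  "axID = {Cond f f | f. True}"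

definition logCE :: "cfm set" where "logCE = clogic {}"
definition logCEN :: "cfm set" where "logCEN = clogic axCN"
definition logCM :: "cfm set" where "logCM = clogic axCM"
definition logCMN :: "cfm set" where "logCMN = clogic (axCM \<union> axCN)"
definition logCMC :: "cfm set" where "logCMC = clogic (axCM \<union> axCC)"
definition logCK :: "cfm set" where "logCK = clogic (axCM \<union> axCC \<union> axCN)"
definition logCKID :: "cfm set" where "logCKID = clogic (axCM \<union> axCC \<union> axCN \<union> axID)"

fun cV :: "bool \<Rightarrow> cfm \<Rightarrow> nat set" where
  "cV b (CAtom p) = (if b then {p} else {})"
| "cV b CBot = {}"
| "cV b (CAnd f g) = cV b f \<union> cV b g"
| "cV b (COr f g) = cV b f \<union> cV b g"
| "cV b (CImp f g) = cV (\<not> b) f \<union> cV b g"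
| "cV b (Cond f g) = cV (\<not> b) f \<union> cV b g"

definition cVall :: "cfm \<Rightarrow> nat set" where "cVall f = cV True f \<union> cV False f"

text \<open>V b: polarised variables (b = True is +), imp: implication, L: the logic (set of theorems).
  Polarity pol ranges over bool (True = +, False = -).\<close>
definition ULIP :: "(bool \<Rightarrow> 'f \<Rightarrow> nat set) \<Rightarrow> ('f \<Rightarrow> 'f \<Rightarrow> 'f) \<Rightarrow> 'f set \<Rightarrow> bool" where
  "ULIP V imp L = (\<forall>\<phi> p pol.
     (\<exists>A. p \<notin> V pol A \<and> (\<forall>d. V d A \<subseteq> V d \<phi>) \<and> imp A \<phi> \<in> L \<and>
          (\<forall>\<psi>. p \<notin> V pol \<psi> \<longrightarrow> imp \<psi> \<phi> \<in> L \<longrightarrow> imp \<psi> A \<in> L)) \<and>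
     (\<exists>E. p \<notin> V pol E \<and> (\<forall>d. V d E \<subseteq> V d \<phi>) \<and> imp \<phi> E \<in> L \<and>
          (\<forall>\<psi>. p \<notin> V pol \<psi> \<longrightarrow> imp \<phi> \<psi> \<in> L \<longrightarrow> imp E \<psi> \<in> L)))"

definition UIP :: "('f \<Rightarrow> nat set) \<Rightarrow> ('f \<Rightarrow> 'f \<Rightarrow> 'f) \<Rightarrow> 'f set \<Rightarrow> bool" where
  "UIP Va imp L = (\<forall>\<phi> p.
     (\<exists>A. p \<notin> Va A \<and> Va A \<subseteq> Va \<phi> \<and> imp A \<phi> \<in> L \<and>
          (\<forall>\<psi>. p \<notin> Va \<psi> \<longrightarrow> imp \<psi> \<phi> \<in> L \<longrightarrow> imp \<psi> A \<in> L)) \<and>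
     (\<exists>E. p \<notin> Va E \<and> Va E \<subseteq> Va \<phi> \<and> imp \<phi> E \<in> L \<and>
          (\<forall>\<psi>. p \<notin> Va \<psi> \<longrightarrow> imp \<phi> \<psi> \<in> L \<longrightarrow> imp E \<psi> \<in> L)))"

definition LIP :: "(bool \<Rightarrow> 'f \<Rightarrow> nat set) \<Rightarrow> ('f \<Rightarrow> 'f \<Rightarrow> 'f) \<Rightarrow> 'f set \<Rightarrow> bool" where
  "LIP V imp L = (\<forall>\<phi> \<psi>. imp \<phi> \<psi> \<in> L \<longrightarrow>
     (\<exists>\<theta>. (\<forall>d. V d \<theta> \<subseteq> V d \<phi> \<inter> V d \<psi>) \<and> imp \<phi> \<theta> \<in> L \<and> imp \<theta> \<psi> \<in> L))"

definition all_interp_props :: "(bool \<Rightarrow> 'f \<Rightarrow> nat set) \<Rightarrow> ('f \<Rightarrow> 'f \<Rightarrow> 'f) \<Rightarrow> 'f set \<Rightarrow> bool" where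
  "all_interp_props V imp L =
     (ULIP V imp L \<and> UIP (\<lambda>f. V True f \<union> V False f) imp L \<and> LIP V imp L)"

end

theory Submission
  imports Defs
begin

text \<open>
  Derivability in each conditional logic has a semantic characterisation: a formula is derivable
  iff it holds under every valuation of its components (atoms and outermost conditionals) that is
  closed under the one-step rules of the logic, which infer a conditional from conditionals with
  equivalent antecedents whose consequents entail its consequent (subject to the arity allowed by
  C and N, to equivalence of consequents in E and EN, and with the antecedent as extra hypothesis in
  ID). Soundness is immediate; completeness holds because rules compose, so closing a countermodel
  of a formula under rules whose premises are its components yields a closed countermodel.

  Uniform interpolants are constructed by induction on the nesting depth of conditionals. For each
  guess X of which components of \<phi> containing p are true, a guard collects the consequences of
  the guess that are free of p in the relevant polarity, among them new conditionals built from
  interpolants of smaller formulas; the interpolant is the conjunction of the implications from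
  the guard of X to \<phi> with the guessed truth values substituted. It is least because every rule
  instance mixing p-free premises with guessed ones factors through one of these conditionals, so
  the least closed valuation generated by a model of a p-free lower bound and a guess respects the
  guess.

  The modal logics are the fragments of the conditional ones with antecedent \<open>\<bottom>\<close>, and ULIP
  yields UIP and LIP by eliminating polarised variables one at a time.
\<close>

fun is_cond :: "cfm \<Rightarrow> bool" where
  "is_cond (Cond a b) = True"
| "is_cond _ = False"

fun antecedent :: "cfm \<Rightarrow> cfm" where
  "antecedent (Cond a b) = a"
| "antecedent _ = CBot"

fun consequent :: "cfm \<Rightarrow> cfm" where
  "consequent (Cond a b) = b"
| "consequent _ = CBot"

lemma cond_eta: "is_cond x \<Longrightarrow> x = Cond (antecedent x) (consequent x)"
  by (cases x) auto

lemma cV_cond: "is_cond x \<Longrightarrow> cV b x = cV (\<not> b) (antecedent x) \<union> cV b (consequent x)"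
  by (cases x) auto

lemma ceval_cond: "is_cond x \<Longrightarrow> ceval v x = v x"
  by (cases x) auto

definition cneg :: "cfm \<Rightarrow> cfm" where
  "cneg f = CImp f CBot"

text \<open>Junk for infinite sets.\<close>
definition cconj :: "cfm set \<Rightarrow> cfm" where
  "cconj S = foldr CAnd (SOME xs. set xs = S) CTop"

lemma ceval_CTop [simp]: "ceval v CTop"
  by (simp add: CTop_def)

lemma cV_CTop [simp]: "cV d CTop = {}"
  by (simp add: CTop_def)

lemma ceval_CIff [simp]: "ceval v (CIff a b) = (ceval v a = ceval v b)"
  by (auto simp: CIff_def)

lemma ceval_cneg [simp]: "ceval v (cneg a) = (\<not> ceval v a)"
  by (simp add: cneg_def)

lemma cV_cneg [simp]: "cV d (cneg a) = cV (\<not> d) a"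
  by (simp add: cneg_def)

lemma finite_cV [simp]: "finite (cV d f)"
  by (induction f arbitrary: d) auto

lemma set_some_list: "finite S \<Longrightarrow> set (SOME xs. set xs = S) = S"
  by (metis (mono_tags) finite_list someI_ex)

lemma ceval_cconj [simp]: "finite S \<Longrightarrow> ceval v (cconj S) = (\<forall>x\<in>S. ceval v x)"
proof -
  have "ceval v (foldr CAnd xs CTop) = (\<forall>x\<in>set xs. ceval v x)" for xs
    by (induction xs) auto
  then show "finite S \<Longrightarrow> ?thesis" unfolding cconj_def by (simp add: set_some_list)
qed

lemma cV_cconj [simp]: "finite S \<Longrightarrow> cV d (cconj S) = (\<Union>x\<in>S. cV d x)"
proof -
  have "cV d (foldr CAnd xs CTop) = (\<Union>x\<in>set xs. cV d x)" for xs
    by (induction xs) auto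
  then show "finite S \<Longrightarrow> ?thesis" unfolding cconj_def by (simp add: set_some_list)
qed

fun cond_depth :: "cfm \<Rightarrow> nat" where
  "cond_depth (CAtom _) = 0"
| "cond_depth CBot = 0"
| "cond_depth (CAnd a b) = max (cond_depth a) (cond_depth b)"
| "cond_depth (COr a b) = max (cond_depth a) (cond_depth b)"
| "cond_depth (CImp a b) = max (cond_depth a) (cond_depth b)"
| "cond_depth (Cond a b) = Suc (max (cond_depth a) (cond_depth b))"

lemma cond_depth_CTop [simp]: "cond_depth CTop = 0"
  by (simp add: CTop_def)

lemma cond_depth_cneg [simp]: "cond_depth (cneg a) = cond_depth a"
  by (simp add: cneg_def)

lemma cond_depth_cond:
  "is_cond x \<Longrightarrow> cond_depth (antecedent x) < cond_depth x \<and> cond_depth (consequent x) < cond_depth x"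
  by (cases x) auto

lemma cond_depth_cconj_le:
  assumes "finite S" "\<forall>x\<in>S. cond_depth x \<le> k"
  shows "cond_depth (cconj S) \<le> k"
proof -
  have "\<forall>x\<in>set xs. cond_depth x \<le> k \<Longrightarrow> cond_depth (foldr CAnd xs CTop) \<le> k" for xs
    by (induction xs) auto
  then show ?thesis using assms unfolding cconj_def by (simp add: set_some_list)
qed

lemma cond_depth_cconj_consequents:
  assumes "finite X" "\<forall>x\<in>X. is_cond x \<and> cond_depth x \<le> n" "0 < n"
  shows "cond_depth (cconj (consequent ` X)) < n"
proof -
  have "\<forall>y\<in>consequent ` X. cond_depth y \<le> n - 1"
    using assms(2) cond_depth_cond by fastforce
  then have "cond_depth (cconj (consequent ` X)) \<le> n - 1"
    using assms(1) by (intro cond_depth_cconj_le) auto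
  then show ?thesis using assms(3) by linarith
qed

text \<open>The atoms and conditionals occurring outside the scope of a conditional, split by the
  polarity of their occurrence; a formula is a propositional combination of these components.\<close>
fun comps :: "bool \<Rightarrow> cfm \<Rightarrow> cfm set" where
  "comps b (CAtom q) = (if b then {CAtom q} else {})"
| "comps b CBot = {}"
| "comps b (CAnd f g) = comps b f \<union> comps b g"
| "comps b (COr f g) = comps b f \<union> comps b g"
| "comps b (CImp f g) = comps (\<not> b) f \<union> comps b g"
| "comps b (Cond f g) = (if b then {Cond f g} else {})"

lemma finite_comps [simp]: "finite (comps b f)"
  by (induction f arbitrary: b) auto

lemma ceval_comps_mono:
  assumes "\<forall>x\<in>comps True f. w x \<longrightarrow> u x" "\<forall>x\<in>comps False f. u x \<longrightarrow> w x" "ceval w f"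
  shows "ceval u f"
  using assms
proof (induction f arbitrary: w u)
  case (CImp f1 f2)
  show ?case
  proof (simp, intro impI)
    assume "ceval u f1"
    then have "ceval w f1"
      using CImp.IH(1)[of u w] CImp.prems(1,2) by auto
    then have "ceval w f2" using CImp.prems(3) by simp
    then show "ceval u f2"
      using CImp.IH(2)[of w u] CImp.prems(1,2) by auto
  qed
next
  case (CAnd f1 f2)
  then show ?case using CAnd.IH[of w u] by auto
next
  case (COr f1 f2)
  then show ?case using COr.IH[of w u] by auto
qed auto

lemma ceval_comps_cong: "\<forall>x\<in>comps True f \<union> comps False f. w x = u x \<Longrightarrow> ceval w f = ceval u f"
  using ceval_comps_mono[of f w u] ceval_comps_mono[of f u w] by auto

lemma cV_comps: "x \<in> comps b f \<Longrightarrow> cV d x \<subseteq> cV (b = d) f"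
proof (induction f arbitrary: b d)
  case (CAnd f1 f2)
  then show ?case by (simp; blast)
next
  case (COr f1 f2)
  then show ?case by (simp; blast)
next
  case (CImp f1 f2)
  then show ?case by (cases b; cases d; fastforce)
qed (auto split: if_splits)

lemma cond_depth_comps: "x \<in> comps b f \<Longrightarrow> cond_depth x \<le> cond_depth f"
  by (induction f arbitrary: b) (auto split: if_splits simp: le_max_iff_disj)

lemma ceval_comps: "x \<in> comps b f \<Longrightarrow> ceval w x = w x"
  by (induction f arbitrary: b) (auto split: if_splits)

definition subst_comp :: "cfm set \<Rightarrow> cfm set \<Rightarrow> cfm \<Rightarrow> cfm" where
  "subst_comp D X x = (if x \<in> D then (if x \<in> X then CTop else CBot) else x)"

fun subst_comps :: "cfm set \<Rightarrow> cfm set \<Rightarrow> cfm \<Rightarrow> cfm" where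
  "subst_comps D X (CAtom q) = subst_comp D X (CAtom q)"
| "subst_comps D X CBot = CBot"
| "subst_comps D X (CAnd f g) = CAnd (subst_comps D X f) (subst_comps D X g)"
| "subst_comps D X (COr f g) = COr (subst_comps D X f) (subst_comps D X g)"
| "subst_comps D X (CImp f g) = CImp (subst_comps D X f) (subst_comps D X g)"
| "subst_comps D X (Cond f g) = subst_comp D X (Cond f g)"

lemma ceval_subst_comps:
  "ceval w (subst_comps D X f) = ceval (\<lambda>x. if x \<in> D then x \<in> X else w x) f"
  by (induction f) (auto simp: subst_comp_def)

lemma cV_subst_comps:
  "q \<in> cV d (subst_comps D X f) \<Longrightarrow> \<exists>b x. x \<in> comps b f \<and> x \<notin> D \<and> q \<in> cV (b = d) x"
proof (induction f arbitrary: d)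
  case (CAnd f1 f2)
  then show ?case by (simp; blast)
next
  case (COr f1 f2)
  then show ?case by (simp; blast)
next
  case (CImp f1 f2)
  then consider "q \<in> cV (\<not> d) (subst_comps D X f1)" | "q \<in> cV d (subst_comps D X f2)" by auto
  then show ?case
  proof cases
    case 1
    then obtain b x where "x \<in> comps b f1" "x \<notin> D" "q \<in> cV (b = (\<not> d)) x" using CImp.IH(1) by blast
    then show ?thesis by (intro exI[of _ "\<not> b"] exI[of _ x]) (cases b; cases d; auto)
  next
    case 2
    then show ?thesis using CImp.IH(2) by (simp; blast)
  qed
qed (auto simp: subst_comp_def split: if_splits)

section \<open>The conditional logics and their rules\<close>

lemma clogic_prop:
  assumes "finite F" "F \<subseteq> clogic Ax" "\<And>v. \<forall>f\<in>F. ceval v f \<Longrightarrow> ceval v g"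
  shows "g \<in> clogic Ax"
  using assms
proof (induction F arbitrary: g rule: finite_induct)
  case empty
  then show ?case by (auto intro: clogic.taut simp: ctaut_def)
next
  case (insert f F)
  have "CImp f g \<in> clogic Ax"
    using insert.IH insert.prems by auto
  moreover have "f \<in> clogic Ax" using insert.prems by auto
  ultimately show ?case by (rule clogic.mp[rotated])
qed

lemma clogic_prop0: "(\<And>v. ceval v g) \<Longrightarrow> g \<in> clogic Ax"
  using clogic_prop[of "{}"] by auto

lemma clogic_prop1: "a \<in> clogic Ax \<Longrightarrow> (\<And>v. ceval v a \<Longrightarrow> ceval v g) \<Longrightarrow> g \<in> clogic Ax"
  using clogic_prop[of "{a}"] by auto

lemma clogic_prop2:
  "a \<in> clogic Ax \<Longrightarrow> b \<in> clogic Ax \<Longrightarrow> (\<And>v. ceval v a \<Longrightarrow> ceval v b \<Longrightarrow> ceval v g) \<Longrightarrow> g \<in> clogic Ax"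
  using clogic_prop[of "{a, b}"] by auto

lemma clogic_prop3:
  "a \<in> clogic Ax \<Longrightarrow> b \<in> clogic Ax \<Longrightarrow> c \<in> clogic Ax \<Longrightarrow>
   (\<And>v. ceval v a \<Longrightarrow> ceval v b \<Longrightarrow> ceval v c \<Longrightarrow> ceval v g) \<Longrightarrow> g \<in> clogic Ax"
  using clogic_prop[of "{a, b, c}"] by auto

lemma clogic_Cond_cong: "CIff b c \<in> clogic Ax \<Longrightarrow> CImp (Cond a b) (Cond a c) \<in> clogic Ax"
  by (rule clogic.re[OF clogic_prop0]) simp_all

datatype cond_logic = CE | CEN | CM | CMN | CMC | CK | CKID

fun has_M :: "cond_logic \<Rightarrow> bool" where
  "has_M CE = False"
| "has_M CEN = False"
| "has_M _ = True"

fun has_C :: "cond_logic \<Rightarrow> bool" where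
  "has_C CMC = True"
| "has_C CK = True"
| "has_C CKID = True"
| "has_C _ = False"

fun has_N :: "cond_logic \<Rightarrow> bool" where
  "has_N CEN = True"
| "has_N CMN = True"
| "has_N CK = True"
| "has_N CKID = True"
| "has_N _ = False"

fun has_ID :: "cond_logic \<Rightarrow> bool" where
  "has_ID CKID = True"
| "has_ID _ = False"

lemma has_C_has_M: "has_C g \<Longrightarrow> has_M g"
  by (cases g) auto

lemma has_ID_has_C: "has_ID g \<Longrightarrow> has_C g"
  by (cases g) auto

lemma has_ID_has_N: "has_ID g \<Longrightarrow> has_N g"
  by (cases g) auto

lemma has_ID_has_M: "has_ID g \<Longrightarrow> has_M g"
  by (cases g) auto

definition cond_axioms :: "cond_logic \<Rightarrow> cfm set" where
  "cond_axioms g = (if has_M g then axCM else {}) \<union> (if has_C g then axCC else {}) \<union>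
     (if has_N g then axCN else {}) \<union> (if has_ID g then axID else {})"

abbreviation CL :: "cond_logic \<Rightarrow> cfm set" where
  "CL g \<equiv> clogic (cond_axioms g)"

definition arity_ok :: "cond_logic \<Rightarrow> nat \<Rightarrow> bool" where
  "arity_ok g k \<longleftrightarrow> (k = 0 \<longrightarrow> has_N g) \<and> (2 \<le> k \<longrightarrow> has_C g)"

definition id_hyp :: "cond_logic \<Rightarrow> cfm \<Rightarrow> cfm" where
  "id_hyp g t = (if has_ID g then antecedent t else CTop)"

text \<open>The one-step rules \<open>ds / t\<close> of a logic. A valuation of the components that is closed under
  them is a model, and these models characterise derivability (\<open>CL_iff_valid\<close>).\<close>
definition cond_rule :: "cond_logic \<Rightarrow> cfm set \<Rightarrow> cfm \<Rightarrow> bool" where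
  "cond_rule g ds t \<longleftrightarrow> finite ds \<and> is_cond t \<and> arity_ok g (card ds) \<and>
     (\<forall>x\<in>ds. is_cond x \<and> CIff (antecedent x) (antecedent t) \<in> CL g) \<and>
     CImp (CAnd (id_hyp g t) (cconj (consequent ` ds))) (consequent t) \<in> CL g \<and>
     (\<not> has_M g \<longrightarrow> CImp (consequent t) (cconj (consequent ` ds)) \<in> CL g)"

definition closed_val :: "cond_logic \<Rightarrow> (cfm \<Rightarrow> bool) \<Rightarrow> bool" where
  "closed_val g v \<longleftrightarrow> (\<forall>ds t. cond_rule g ds t \<longrightarrow> (\<forall>x\<in>ds. v x) \<longrightarrow> v t)"

lemma closed_valD: "closed_val g v \<Longrightarrow> cond_rule g ds t \<Longrightarrow> \<forall>x\<in>ds. v x \<Longrightarrow> v t"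
  unfolding closed_val_def by blast

lemma ceval_id_hyp: "ceval v (id_hyp g t) = (has_ID g \<longrightarrow> ceval v (antecedent t))"
  unfolding id_hyp_def by auto

lemma cond_ruleD:
  assumes "cond_rule g ds t"
  shows "finite ds" "is_cond t" "arity_ok g (card ds)"
    "\<forall>x\<in>ds. is_cond x \<and> CIff (antecedent x) (antecedent t) \<in> CL g"
    "CImp (CAnd (id_hyp g t) (cconj (consequent ` ds))) (consequent t) \<in> CL g"
    "\<not> has_M g \<Longrightarrow> CImp (consequent t) (cconj (consequent ` ds)) \<in> CL g"
  using assms unfolding cond_rule_def by blast+

lemma cond_rule_single: "is_cond x \<Longrightarrow> cond_rule g {x} x"
  unfolding cond_rule_def id_hyp_def arity_ok_def by (auto intro!: clogic_prop0)

lemma cond_axioms_sound: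
  assumes "f \<in> cond_axioms g" "closed_val g v"
  shows "ceval v f"
proof -
  have by_rule: "v t" if "cond_rule g ds t" "\<forall>x\<in>ds. v x" for ds t
    using closed_valD[OF assms(2) that] .
  have M: "ceval v f" if "f \<in> axCM" "has_M g" for f
  proof -
    obtain a b c where f: "f = CImp (Cond a (CAnd b c)) (CAnd (Cond a b) (Cond a c))"
      using \<open>f \<in> axCM\<close> unfolding axCM_def by blast
    have "cond_rule g {Cond a (CAnd b c)} (Cond a b)" "cond_rule g {Cond a (CAnd b c)} (Cond a c)"
      using that(2) unfolding cond_rule_def id_hyp_def arity_ok_def by (auto intro!: clogic_prop0)
    then show ?thesis unfolding f using by_rule by fastforce
  qed
  have C: "ceval v f" if "f \<in> axCC" "has_C g" for f
  proof -
    obtain a b c where f: "f = CImp (CAnd (Cond a b) (Cond a c)) (Cond a (CAnd b c))"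
      using \<open>f \<in> axCC\<close> unfolding axCC_def by blast
    have "card {Cond a b, Cond a c} \<le> 2" by (simp add: card_insert_le_m1)
    then have "cond_rule g {Cond a b, Cond a c} (Cond a (CAnd b c))"
      using that(2) has_C_has_M[OF that(2)]
      unfolding cond_rule_def id_hyp_def arity_ok_def by (auto intro!: clogic_prop0)
    then show ?thesis unfolding f using by_rule by fastforce
  qed
  have N: "ceval v f" if "f \<in> axCN" "has_N g" for f
  proof -
    obtain a where f: "f = Cond a CTop"
      using \<open>f \<in> axCN\<close> unfolding axCN_def by blast
    have "cond_rule g {} (Cond a CTop)"
      using that(2) unfolding cond_rule_def id_hyp_def arity_ok_def by (auto intro!: clogic_prop0)
    then show ?thesis unfolding f using by_rule by fastforce
  qed
  have ID: "ceval v f" if "f \<in> axID" "has_ID g" for f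
  proof -
    obtain a where f: "f = Cond a a"
      using \<open>f \<in> axID\<close> unfolding axID_def by blast
    have "cond_rule g {} (Cond a a)"
      using that(2) has_ID_has_N[OF that(2)]
      unfolding cond_rule_def id_hyp_def arity_ok_def by (auto intro!: clogic_prop0)
    then show ?thesis unfolding f using by_rule by fastforce
  qed
  show ?thesis
    using assms(1) M C N ID unfolding cond_axioms_def by (auto split: if_splits)
qed

section \<open>Semantic characterisation of derivability\<close>

lemma CL_sound: "f \<in> CL g \<Longrightarrow> closed_val g v \<Longrightarrow> ceval v f"
proof (induction rule: clogic.induct)
  case (taut f)
  then show ?case by (simp add: ctaut_def)
next
  case (ax f)
  then show ?case using cond_axioms_sound by blast
next
  case (mp f h)
  then show ?case by simp
next
  case (re a0 a1 b0 b1)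
  have "cond_rule g {Cond a0 b0} (Cond a1 b1)"
    using re.hyps unfolding cond_rule_def id_hyp_def arity_ok_def
    by (auto intro!: clogic_prop1[of "CIff b0 b1"])
  then show ?case using closed_valD[OF re.prems] by fastforce
qed

lemma CL_Cond_mono:
  assumes "has_M g" "CImp b c \<in> CL g"
  shows "CImp (Cond a b) (Cond a c) \<in> CL g"
proof -
  have "CIff b (CAnd c b) \<in> CL g" by (rule clogic_prop1[OF assms(2)]) auto
  then have 1: "CImp (Cond a b) (Cond a (CAnd c b)) \<in> CL g" by (rule clogic_Cond_cong)
  have 2: "CImp (Cond a (CAnd c b)) (CAnd (Cond a c) (Cond a b)) \<in> CL g"
    by (rule clogic.ax) (use assms(1) in \<open>auto simp: cond_axioms_def axCM_def\<close>)
  show ?thesis by (rule clogic_prop2[OF 1 2]) auto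
qed

lemma CL_Cond_cconj:
  assumes "has_C g" "finite S" "S \<noteq> {}"
  shows "CImp (cconj (Cond a ` S)) (Cond a (cconj S)) \<in> CL g"
  using assms(2,3)
proof (induction S rule: finite_ne_induct)
  case (singleton b)
  have "CIff b (cconj {b}) \<in> CL g" by (rule clogic_prop0) simp
  then have "CImp (Cond a b) (Cond a (cconj {b})) \<in> CL g" by (rule clogic_Cond_cong)
  then show ?case by (rule clogic_prop1) simp
next
  case (insert b S)
  have C: "CImp (CAnd (Cond a b) (Cond a (cconj S))) (Cond a (CAnd b (cconj S))) \<in> CL g"
    by (rule clogic.ax) (use assms(1) in \<open>auto simp: cond_axioms_def axCC_def\<close>)
  have "CIff (CAnd b (cconj S)) (cconj (insert b S)) \<in> CL g"
    by (rule clogic_prop0) (use insert in auto)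
  then have E: "CImp (Cond a (CAnd b (cconj S))) (Cond a (cconj (insert b S))) \<in> CL g"
    by (rule clogic_Cond_cong)
  show ?case by (rule clogic_prop3[OF insert.IH C E]) (use insert in auto)
qed

lemma CL_Cond_nec:
  assumes "has_N g" "c \<in> CL g"
  shows "Cond a c \<in> CL g"
proof -
  have 1: "Cond a CTop \<in> CL g"
    by (rule clogic.ax) (use assms(1) in \<open>auto simp: cond_axioms_def axCN_def\<close>)
  have "CIff CTop c \<in> CL g" by (rule clogic_prop1[OF assms(2)]) auto
  then have 2: "CImp (Cond a CTop) (Cond a c) \<in> CL g" by (rule clogic_Cond_cong)
  show ?thesis by (rule clogic_prop2[OF 1 2]) auto
qed

lemma CL_Cond_cconj_mono:
  assumes "has_C g" "finite S" "S \<noteq> {}" "CImp (cconj S) c \<in> CL g"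
  shows "CImp (cconj (Cond a ` S)) (Cond a c) \<in> CL g"
proof -
  have 1: "CImp (cconj (Cond a ` S)) (Cond a (cconj S)) \<in> CL g"
    by (rule CL_Cond_cconj[OF assms(1-3)])
  have 2: "CImp (Cond a (cconj S)) (Cond a c) \<in> CL g"
    by (rule CL_Cond_mono[OF has_C_has_M[OF assms(1)] assms(4)])
  show ?thesis by (rule clogic_prop2[OF 1 2]) (use assms(2) in auto)
qed

lemma CL_Cond_cconj_ID:
  assumes "has_ID g" "finite S" "CImp (CAnd a (cconj S)) c \<in> CL g"
  shows "CImp (cconj (Cond a ` S)) (Cond a c) \<in> CL g"
proof -
  have ID: "Cond a a \<in> CL g"
    by (rule clogic.ax) (use assms(1) in \<open>auto simp: cond_axioms_def axID_def\<close>)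
  have "CImp (cconj (insert a S)) c \<in> CL g"
    by (rule clogic_prop1[OF assms(3)]) (use assms(2) in auto)
  then have "CImp (cconj (Cond a ` insert a S)) (Cond a c) \<in> CL g"
    using CL_Cond_cconj_mono has_ID_has_C[OF assms(1)] assms(2) by blast
  then show ?thesis by (rule clogic_prop2[OF _ ID]) (use assms(2) in auto)
qed

lemma cond_rule_Cond:
  assumes "cond_rule g ds (Cond a c)"
  shows "CImp (cconj (Cond a ` consequent ` ds)) (Cond a c) \<in> CL g"
proof -
  define S where "S = consequent ` ds"
  have fin: "finite ds" "finite S" and ar: "arity_ok g (card ds)"
    and I: "CImp (CAnd (id_hyp g (Cond a c)) (cconj S)) c \<in> CL g"
    and E: "\<not> has_M g \<Longrightarrow> CImp c (cconj S) \<in> CL g"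
    using cond_ruleD[OF assms] unfolding S_def by auto
  show ?thesis
  proof (cases "has_ID g")
    case True
    then show ?thesis using CL_Cond_cconj_ID[OF True fin(2)] I unfolding S_def id_hyp_def by simp
  next
    case False
    have I': "CImp (cconj S) c \<in> CL g"
      by (rule clogic_prop1[OF I]) (use False in \<open>simp add: ceval_id_hyp\<close>)
    have "ds = {} \<or> (\<exists>x. ds = {x}) \<or> 2 \<le> card ds"
      using fin(1) by (metis One_nat_def card_1_singletonE card_0_eq less_2_cases not_le)
    then consider "ds = {}" | x where "ds = {x}" | "2 \<le> card ds" by blast
    then show ?thesis
    proof cases
      case 1
      then have "has_N g" using ar by (simp add: arity_ok_def)
      have "c \<in> CL g" by (rule clogic_prop1[OF I']) (simp add: 1 S_def)
      then have "Cond a c \<in> CL g" by (rule CL_Cond_nec[OF \<open>has_N g\<close>])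
      then show ?thesis by (rule clogic_prop1) simp
    next
      case (2 x)
      have "CImp (Cond a (consequent x)) (Cond a c) \<in> CL g"
      proof (cases "has_M g")
        case True
        have "CImp (consequent x) c \<in> CL g" by (rule clogic_prop1[OF I']) (simp add: S_def 2)
        then show ?thesis by (rule CL_Cond_mono[OF True])
      next
        case False
        have "CIff (consequent x) c \<in> CL g"
          by (rule clogic_prop2[OF I' E[OF False]]) (auto simp: S_def 2)
        then show ?thesis by (rule clogic_Cond_cong)
      qed
      then show ?thesis by (rule clogic_prop1) (simp add: 2)
    next
      case 3
      then have "has_C g" using ar by (simp add: arity_ok_def)
      then show ?thesis using CL_Cond_cconj_mono[OF _ fin(2) _ I'] 3 unfolding S_def by fastforce
    qed
  qed
qed

lemma cond_rule_derivable:
  assumes "cond_rule g ds t"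
  shows "CImp (cconj ds) t \<in> CL g"
proof -
  define a where "a = antecedent t"
  have fin: "finite ds" and t: "t = Cond a (consequent t)"
    and A: "\<forall>x\<in>ds. is_cond x \<and> CIff (antecedent x) a \<in> CL g"
    using cond_ruleD[OF assms] cond_eta unfolding a_def by auto
  have core: "CImp (cconj (Cond a ` consequent ` ds)) t \<in> CL g"
    using cond_rule_Cond[of g ds a "consequent t"] assms t by simp
  define P where "P = (\<lambda>x. CImp x (Cond a (consequent x))) ` ds"
  have P: "P \<subseteq> CL g"
  proof
    fix f assume "f \<in> P"
    then obtain x where x: "x \<in> ds" "f = CImp x (Cond a (consequent x))" unfolding P_def by blast
    have "CImp (Cond (antecedent x) (consequent x)) (Cond a (consequent x)) \<in> CL g"
      using A x(1) clogic.re[OF _ clogic_prop0] by simp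
    then show "f \<in> CL g" using x A cond_eta by metis
  qed
  show ?thesis
  proof (rule clogic_prop)
    show "insert (CImp (cconj (Cond a ` consequent ` ds)) t) P \<subseteq> CL g" using core P by simp
    show "finite (insert (CImp (cconj (Cond a ` consequent ` ds)) t) P)"
      using fin unfolding P_def by simp
  next
    fix v assume "\<forall>f\<in>insert (CImp (cconj (Cond a ` consequent ` ds)) t) P. ceval v f"
    then show "ceval v (CImp (cconj ds) t)" using fin unfolding P_def by auto
  qed
qed

lemma arity_ok_UN:
  assumes "finite es" "arity_ok g (card es)" "\<forall>e\<in>es. finite (h e) \<and> arity_ok g (card (h e))"
  shows "arity_ok g (card (\<Union>e\<in>es. h e))"
  unfolding arity_ok_def
proof (intro conjI impI)
  assume "card (\<Union>e\<in>es. h e) = 0"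
  then have "\<forall>e\<in>es. h e = {}" using assms by auto
  then show "has_N g"
    using assms(2,3) by (cases "es = {}") (auto simp: arity_ok_def)
next
  assume two: "2 \<le> card (\<Union>e\<in>es. h e)"
  show "has_C g"
  proof (rule ccontr)
    assume "\<not> has_C g"
    then have "card es \<le> 1" "\<forall>e\<in>es. card (h e) \<le> 1" using assms(2,3) by (auto simp: arity_ok_def)
    then have "es = {} \<or> (\<exists>e. es = {e} \<and> card (h e) \<le> 1)"
      using assms(1) by (metis card_0_eq card_1_singletonE insertI1 le_SucE le_zero_eq One_nat_def)
    then show False using two by auto
  qed
qed

lemma cond_rule_compose_consequent:
  assumes fes: "finite es" and R: "\<forall>e\<in>es. cond_rule g (h e) e"
    and A: "\<forall>e\<in>es. CIff (antecedent e) (antecedent t) \<in> CL g"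
    and I: "CImp (CAnd (id_hyp g t) (cconj (consequent ` es))) (consequent t) \<in> CL g"
  shows "CImp (CAnd (id_hyp g t) (cconj (consequent ` (\<Union>e\<in>es. h e)))) (consequent t) \<in> CL g"
proof -
  have fh: "\<forall>e\<in>es. finite (h e)" using R cond_ruleD(1) by blast
  define F where "F = insert (CImp (CAnd (id_hyp g t) (cconj (consequent ` es))) (consequent t))
      ((\<lambda>e. CImp (CAnd (id_hyp g e) (cconj (consequent ` h e))) (consequent e)) ` es \<union>
       (\<lambda>e. CIff (antecedent e) (antecedent t)) ` es)"
  show ?thesis
  proof (rule clogic_prop[of F])
    show "finite F" unfolding F_def using fes by auto
    show "F \<subseteq> CL g" unfolding F_def using I A R cond_ruleD(5) by blast
  next
    fix v assume V: "\<forall>f\<in>F. ceval v f"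
    have "ceval v (consequent t)"
      if it: "ceval v (id_hyp g t)" and cu: "\<forall>x\<in>(\<Union>e\<in>es. h e). ceval v (consequent x)"
    proof -
      have "ceval v (consequent e)" if e: "e \<in> es" for e
      proof -
        have "ceval v (CIff (antecedent e) (antecedent t))" using V e unfolding F_def by blast
        then have "ceval v (id_hyp g e)" using it by (simp add: ceval_id_hyp)
        moreover have "ceval v (CImp (CAnd (id_hyp g e) (cconj (consequent ` h e))) (consequent e))"
          using V e unfolding F_def by blast
        ultimately show ?thesis using cu fh e by auto
      qed
      moreover have "ceval v (CImp (CAnd (id_hyp g t) (cconj (consequent ` es))) (consequent t))"
        using V unfolding F_def by blast
      ultimately show ?thesis using it fes by auto
    qed
    then show "ceval v (CImp (CAnd (id_hyp g t) (cconj (consequent ` (\<Union>e\<in>es. h e)))) (consequent t))"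
      using fes fh by auto
  qed
qed

lemma cond_rule_compose_consequent_converse:
  assumes fes: "finite es" and nM: "\<not> has_M g" and R: "\<forall>e\<in>es. cond_rule g (h e) e"
    and E: "CImp (consequent t) (cconj (consequent ` es)) \<in> CL g"
  shows "CImp (consequent t) (cconj (consequent ` (\<Union>e\<in>es. h e))) \<in> CL g"
proof -
  have fh: "\<forall>e\<in>es. finite (h e)" using R cond_ruleD(1) by blast
  define F where "F = insert (CImp (consequent t) (cconj (consequent ` es)))
      ((\<lambda>e. CImp (consequent e) (cconj (consequent ` h e))) ` es)"
  show ?thesis
  proof (rule clogic_prop[of F])
    show "finite F" unfolding F_def using fes by auto
    show "F \<subseteq> CL g" unfolding F_def using E R cond_ruleD(6)[OF _ nM] by blast
  next
    fix v assume V: "\<forall>f\<in>F. ceval v f"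
    have "ceval v (consequent x)" if ct: "ceval v (consequent t)" and x: "x \<in> (\<Union>e\<in>es. h e)" for x
    proof -
      obtain e where e: "e \<in> es" "x \<in> h e" using x by blast
      have "ceval v (CImp (consequent t) (cconj (consequent ` es)))"
        using V unfolding F_def by blast
      then have "ceval v (consequent e)" using ct fes e by auto
      moreover have "ceval v (CImp (consequent e) (cconj (consequent ` h e)))"
        using V e unfolding F_def by blast
      ultimately show ?thesis using fh e by auto
    qed
    then show "ceval v (CImp (consequent t) (cconj (consequent ` (\<Union>e\<in>es. h e))))"
      using fes fh by auto
  qed
qed

lemma cond_rule_compose:
  assumes R: "cond_rule g es t" and H: "\<forall>e\<in>es. cond_rule g (h e) e"
  shows "cond_rule g (\<Union>e\<in>es. h e) t"
proof -
  have fes: "finite es" and tC: "is_cond t" and N: "arity_ok g (card es)"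
    and A: "\<forall>x\<in>es. is_cond x \<and> CIff (antecedent x) (antecedent t) \<in> CL g"
    and I: "CImp (CAnd (id_hyp g t) (cconj (consequent ` es))) (consequent t) \<in> CL g"
    and E: "\<not> has_M g \<Longrightarrow> CImp (consequent t) (cconj (consequent ` es)) \<in> CL g"
    using cond_ruleD[OF R] by blast+
  have fU: "finite (\<Union>e\<in>es. h e)" using fes H cond_ruleD(1) by blast
  have "\<forall>e\<in>es. finite (h e) \<and> arity_ok g (card (h e))" using H cond_ruleD(1,3) by blast
  then have NU: "arity_ok g (card (\<Union>e\<in>es. h e))" by (rule arity_ok_UN[OF fes N])
  have AU: "\<forall>x\<in>(\<Union>e\<in>es. h e). is_cond x \<and> CIff (antecedent x) (antecedent t) \<in> CL g"
  proof
    fix x assume "x \<in> (\<Union>e\<in>es. h e)"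
    then obtain e where e: "e \<in> es" "x \<in> h e" by blast
    have "is_cond x \<and> CIff (antecedent x) (antecedent e) \<in> CL g" using H e cond_ruleD(4) by blast
    moreover have "CIff (antecedent e) (antecedent t) \<in> CL g" using A e by auto
    ultimately show "is_cond x \<and> CIff (antecedent x) (antecedent t) \<in> CL g"
      using clogic_prop2[of "CIff (antecedent x) (antecedent e)" _ "CIff (antecedent e) (antecedent t)"]
      by auto
  qed
  show ?thesis
    unfolding cond_rule_def
    using fU tC NU AU cond_rule_compose_consequent[OF fes H _ I] A
      cond_rule_compose_consequent_converse[OF fes _ H E] by (intro conjI) simp_all
qed

definition rule_closure :: "cond_logic \<Rightarrow> cfm set \<Rightarrow> cfm \<Rightarrow> bool" where
  "rule_closure g B x \<longleftrightarrow> (if is_cond x then \<exists>ds\<subseteq>B. cond_rule g ds x else x \<in> B)"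

text \<open>Rules compose, so a single round of rule applications already closes B.\<close>
lemma closed_val_rule_closure: "closed_val g (rule_closure g B)"
  unfolding closed_val_def
proof (intro allI impI)
  fix es t assume R: "cond_rule g es t" and T: "\<forall>x\<in>es. rule_closure g B x"
  have "\<forall>x\<in>es. is_cond x" using cond_ruleD(4)[OF R] by blast
  then have "\<forall>e\<in>es. \<exists>ds. ds \<subseteq> B \<and> cond_rule g ds e"
    using T unfolding rule_closure_def by simp
  then obtain h where h: "\<forall>e\<in>es. h e \<subseteq> B \<and> cond_rule g (h e) e" by (metis bchoice)
  then have "cond_rule g (\<Union>e\<in>es. h e) t" "(\<Union>e\<in>es. h e) \<subseteq> B"
    using cond_rule_compose[OF R] by blast+
  then show "rule_closure g B t" using cond_ruleD(2)[OF R] unfolding rule_closure_def by auto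
qed

lemma rule_closure_base: "x \<in> B \<Longrightarrow> rule_closure g B x"
  unfolding rule_closure_def using cond_rule_single by auto

lemma rule_closureE:
  assumes "rule_closure g B x"
  obtains "\<not> is_cond x" "x \<in> B" | ds where "is_cond x" "ds \<subseteq> B" "cond_rule g ds x"
  using assms unfolding rule_closure_def by (auto split: if_splits)

lemma CL_complete:
  assumes valid: "\<And>v. closed_val g v \<Longrightarrow> ceval v f"
  shows "f \<in> CL g"
proof -
  define C where "C = {x \<in> comps True f \<union> comps False f. is_cond x}"
  define F where "F = (\<lambda>(ds, t). CImp (cconj ds) t) ` {(ds, t). ds \<subseteq> C \<and> t \<in> C \<and> cond_rule g ds t}"
  have "finite C" unfolding C_def by auto
  then have fF: "finite F"
    unfolding F_def by (auto intro: finite_subset[of _ "Pow C \<times> C"])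
  have FL: "F \<subseteq> CL g" unfolding F_def using cond_rule_derivable by auto
  show ?thesis
  proof (rule clogic_prop[OF fF FL])
    fix v assume V: "\<forall>h\<in>F. ceval v h"
    define B where "B = {y. v y \<and> (is_cond y \<longrightarrow> y \<in> C)}"
    have "rule_closure g B x = v x" if x: "x \<in> comps True f \<union> comps False f" for x
    proof
      assume "rule_closure g B x"
      then show "v x"
      proof (cases rule: rule_closureE)
        case (2 ds)
        then have "x \<in> C" "ds \<subseteq> C" "finite ds" "\<forall>y\<in>ds. ceval v y"
          using x ceval_cond cond_ruleD(1,4)[OF 2(3)] unfolding B_def C_def by auto
        then have "ceval v (CImp (cconj ds) x)" "\<forall>y\<in>ds. ceval v y"
          using V 2(3) unfolding F_def by auto
        then show "v x" using ceval_cond[OF 2(1)] \<open>finite ds\<close> by auto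
      qed (simp add: B_def)
    next
      assume "v x"
      then show "rule_closure g B x" using x by (intro rule_closure_base) (simp add: B_def C_def)
    qed
    then have "ceval (rule_closure g B) f = ceval v f" by (intro ceval_comps_cong) blast
    then show "ceval v f" using valid[OF closed_val_rule_closure] by simp
  qed
qed

theorem CL_iff_valid: "f \<in> CL g \<longleftrightarrow> (\<forall>v. closed_val g v \<longrightarrow> ceval v f)"
  using CL_sound CL_complete by blast

definition entails :: "cond_logic \<Rightarrow> cfm \<Rightarrow> cfm \<Rightarrow> bool" where
  "entails g a b \<longleftrightarrow> (\<forall>v. closed_val g v \<longrightarrow> ceval v a \<longrightarrow> ceval v b)"

lemma CImp_in_CL_iff: "CImp a b \<in> CL g \<longleftrightarrow> entails g a b"
  unfolding entails_def CL_iff_valid by simp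

lemma cond_rule_sem:
  "cond_rule g ds t \<longleftrightarrow> finite ds \<and> is_cond t \<and> arity_ok g (card ds) \<and>
     (\<forall>x\<in>ds. is_cond x \<and> (\<forall>v. closed_val g v \<longrightarrow> ceval v (antecedent x) = ceval v (antecedent t))) \<and>
     (\<forall>v. closed_val g v \<longrightarrow> (has_ID g \<longrightarrow> ceval v (antecedent t)) \<longrightarrow>
        (\<forall>x\<in>ds. ceval v (consequent x)) \<longrightarrow> ceval v (consequent t)) \<and>
     (\<not> has_M g \<longrightarrow> (\<forall>v. closed_val g v \<longrightarrow> ceval v (consequent t) \<longrightarrow> (\<forall>x\<in>ds. ceval v (consequent x))))"
  by (cases "finite ds") (auto simp: cond_rule_def CL_iff_valid ceval_id_hyp)

lemma cond_rule_semE: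
  assumes "cond_rule g ds t"
  obtains "finite ds" "is_cond t" "arity_ok g (card ds)"
    "\<forall>x\<in>ds. is_cond x \<and> (\<forall>v. closed_val g v \<longrightarrow> ceval v (antecedent x) = ceval v (antecedent t))"
    "\<forall>v. closed_val g v \<longrightarrow> (has_ID g \<longrightarrow> ceval v (antecedent t)) \<longrightarrow>
        (\<forall>x\<in>ds. ceval v (consequent x)) \<longrightarrow> ceval v (consequent t)"
    "\<not> has_M g \<longrightarrow> (\<forall>v. closed_val g v \<longrightarrow> ceval v (consequent t) \<longrightarrow> (\<forall>x\<in>ds. ceval v (consequent x)))"
  using assms unfolding cond_rule_sem by blast

lemma cond_rule_semI:
  assumes "finite ds" "is_cond t" "arity_ok g (card ds)" "\<And>x. x \<in> ds \<Longrightarrow> is_cond x"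
    "\<And>x v. x \<in> ds \<Longrightarrow> closed_val g v \<Longrightarrow> ceval v (antecedent x) = ceval v (antecedent t)"
    "\<And>v. closed_val g v \<Longrightarrow> has_ID g \<longrightarrow> ceval v (antecedent t) \<Longrightarrow>
       \<forall>x\<in>ds. ceval v (consequent x) \<Longrightarrow> ceval v (consequent t)"
    "\<And>v x. \<not> has_M g \<Longrightarrow> closed_val g v \<Longrightarrow> ceval v (consequent t) \<Longrightarrow> x \<in> ds \<Longrightarrow>
       ceval v (consequent x)"
  shows "cond_rule g ds t"
  using assms unfolding cond_rule_sem by blast

lemma arity_ok_mono: "arity_ok g m \<Longrightarrow> 1 \<le> k \<Longrightarrow> k \<le> m \<Longrightarrow> arity_ok g k"
  unfolding arity_ok_def by auto

lemma arity_ok_not_M: "\<not> has_M g \<Longrightarrow> arity_ok g k \<Longrightarrow> k \<le> 1"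
  using has_C_has_M unfolding arity_ok_def by force

section \<open>Uniform interpolants\<close>

definition free :: "nat \<Rightarrow> bool \<Rightarrow> cfm set" where
  "free p b = {x. p \<notin> cV b x}"

text \<open>A is the uniform interpolant \<open>\<forall>\<^sup>pol p \<phi>\<close>, with derivability replaced by its semantic
  characterisation.\<close>
definition uniform_interp :: "cond_logic \<Rightarrow> nat \<Rightarrow> bool \<Rightarrow> cfm \<Rightarrow> cfm \<Rightarrow> bool" where
  "uniform_interp g p pol \<phi> A \<longleftrightarrow> p \<notin> cV pol A \<and> (\<forall>d. cV d A \<subseteq> cV d \<phi>) \<and> entails g A \<phi> \<and>
     (\<forall>\<psi>. p \<notin> cV pol \<psi> \<longrightarrow> entails g \<psi> \<phi> \<longrightarrow> entails g \<psi> A)"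

lemma uniform_interpD:
  assumes "uniform_interp g p pol \<phi> A"
  shows "p \<notin> cV pol A" "cV d A \<subseteq> cV d \<phi>" "closed_val g v \<Longrightarrow> ceval v A \<Longrightarrow> ceval v \<phi>"
    "p \<notin> cV pol \<psi> \<Longrightarrow> entails g \<psi> \<phi> \<Longrightarrow> entails g \<psi> A"
  using assms unfolding uniform_interp_def entails_def by blast+

lemma uniform_interp_cneg:
  assumes "uniform_interp g p pol (cneg c) Q"
  shows "closed_val g v \<Longrightarrow> ceval v c \<Longrightarrow> ceval v (cneg Q)"
    and "p \<notin> cV (\<not> pol) \<psi> \<Longrightarrow> entails g c \<psi> \<Longrightarrow> entails g (cneg Q) \<psi>"
proof -
  show "closed_val g v \<Longrightarrow> ceval v c \<Longrightarrow> ceval v (cneg Q)"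
    using uniform_interpD(3)[OF assms] by auto
  assume "p \<notin> cV (\<not> pol) \<psi>" "entails g c \<psi>"
  moreover have "entails g (cneg \<psi>) (cneg c)"
    using \<open>entails g c \<psi>\<close> unfolding entails_def ceval_cneg by blast
  ultimately have "entails g (cneg \<psi>) Q"
    using uniform_interpD(4)[OF assms, of "cneg \<psi>"] by simp
  then show "entails g (cneg Q) \<psi>" unfolding entails_def by auto
qed

lemma uniform_interp_equiv:
  assumes "uniform_interp g p pol a A" "p \<notin> cV pol b"
    "\<And>v. closed_val g v \<Longrightarrow> ceval v a = ceval v b" "closed_val g v"
  shows "ceval v A = ceval v b"
proof -
  have "entails g b a" using assms(3) unfolding entails_def by blast
  then have "entails g b A" using uniform_interpD(4)[OF assms(1,2)] by blast
  then show ?thesis using uniform_interpD(3)[OF assms(1) assms(4)] assms(3,4)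
    unfolding entails_def by blast
qed

text \<open>Uniform interpolants I of all formulas of conditional depth below n, which the
  construction of the interpolants at depth n uses for antecedents and consequents.\<close>
locale interpolants_below =
  fixes g :: cond_logic and p :: nat and n :: nat and I :: "bool \<Rightarrow> cfm \<Rightarrow> cfm"
  assumes interp: "cond_depth f < n \<Longrightarrow> uniform_interp g p b f (I b f)"
begin

definition ex_cond :: "bool \<Rightarrow> cfm set \<Rightarrow> cfm" where
  "ex_cond pol X =
     Cond (I pol (antecedent (SOME x. x \<in> X))) (cneg (I pol (cneg (cconj (consequent ` X)))))"

definition all_cond :: "bool \<Rightarrow> cfm set \<Rightarrow> cfm \<Rightarrow> cfm" where
  "all_cond pol X d = Cond (I (\<not> pol) (antecedent d))
     (I pol (CImp (CAnd (id_hyp g d) (cconj (consequent ` X))) (consequent d)))"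

text \<open>The two factorisation lemmas are the core of the proof that the interpolant is least: a rule
  instance whose premises Z are free of p in polarity pol factors through a single conditional,
  built from interpolants of smaller depth, that is as free of p as the guard requires.\<close>
lemma rule_factor_ex_cond:
  assumes Zf: "finite Z" and ZP: "Z \<subseteq> free p pol"
    and Xd: "\<forall>x\<in>X. cond_depth x \<le> n" and X1: "X - Z \<noteq> {}"
    and eP: "e \<in> free p (\<not> pol)" and R: "cond_rule g (Z \<union> X) e"
  shows "ex_cond pol (X - Z) \<in> free p (\<not> pol) \<and> cond_rule g (X - Z) (ex_cond pol (X - Z)) \<and>
    cond_rule g (insert (ex_cond pol (X - Z)) Z) e"
proof -
  define X1 where "X1 = X - Z"
  define a0 where "a0 = antecedent (SOME x. x \<in> X1)"
  define c where "c = cconj (consequent ` X1)"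
  define Q where "Q = I pol (cneg c)"
  obtain fin: "finite (Z \<union> X)" and eC: "is_cond e" and N: "arity_ok g (card (Z \<union> X))" and
    A: "\<forall>x\<in>Z \<union> X. is_cond x \<and>
          (\<forall>v. closed_val g v \<longrightarrow> ceval v (antecedent x) = ceval v (antecedent e))" and
    S: "\<forall>v. closed_val g v \<longrightarrow> (has_ID g \<longrightarrow> ceval v (antecedent e)) \<longrightarrow>
          (\<forall>x\<in>Z \<union> X. ceval v (consequent x)) \<longrightarrow> ceval v (consequent e)" and
    E: "\<not> has_M g \<longrightarrow>
          (\<forall>v. closed_val g v \<longrightarrow> ceval v (consequent e) \<longrightarrow> (\<forall>x\<in>Z \<union> X. ceval v (consequent x)))"
    using cond_rule_semE[OF R] .
  have fX1: "finite X1" and U: "Z \<union> X = Z \<union> X1" using fin unfolding X1_def by auto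
  have "X1 \<noteq> {}" using X1 unfolding X1_def .
  then have x0: "(SOME x. x \<in> X1) \<in> X1" by (simp add: some_in_eq)
  have card_U: "card (Z \<union> X) = card Z + card X1"
    unfolding U using Zf fX1 by (intro card_Un_disjoint) (auto simp: X1_def)
  have "1 \<le> card X1" using fX1 x0 by (auto simp: Suc_le_eq card_gt_0_iff)
  have X1C: "\<forall>x\<in>X1. is_cond x \<and> cond_depth x \<le> n" using A Xd unfolding X1_def by blast
  then have "cond_depth a0 < n" "0 < n"
    using x0 cond_depth_cond unfolding a0_def by fastforce+
  then have Ua: "uniform_interp g p pol a0 (I pol a0)"
    and Uc: "uniform_interp g p pol (cneg c) Q"
    using interp cond_depth_cconj_consequents[OF fX1 X1C] unfolding Q_def c_def by simp_all
  have evc: "ceval v c = (\<forall>x\<in>X1. ceval v (consequent x))" for v unfolding c_def using fX1 by simp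
  have antE: "p \<notin> cV pol (antecedent e)" and cnsE: "p \<notin> cV (\<not> pol) (consequent e)"
    using eP cV_cond[OF eC, of "\<not> pol"] unfolding free_def by auto
  have ant0: "ceval v (I pol a0) = ceval v (antecedent e)" if "closed_val g v" for v
    using uniform_interp_equiv[OF Ua antE _ that] A x0 U unfolding a0_def by blast
  define \<psi> where "\<psi> = CImp (CAnd (id_hyp g e) (cconj (consequent ` Z))) (consequent e)"
  have "p \<notin> cV pol (consequent z)" if "z \<in> Z" for z
    using ZP that A cV_cond[of z pol] unfolding free_def by auto
  then have "p \<notin> cV (\<not> pol) \<psi>"
    using Zf antE cnsE unfolding \<psi>_def id_hyp_def by auto
  moreover have "entails g c \<psi>"
    using S evc U Zf unfolding entails_def \<psi>_def by (auto simp: ceval_id_hyp)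
  ultimately have Q\<psi>: "entails g (cneg Q) \<psi>" by (rule uniform_interp_cneg(2)[OF Uc])
  \<comment> \<open>in E and EN a rule has a single premise\<close>
  have not_M: "Z = {} \<and> \<not> has_ID g" if "\<not> has_M g"
  proof -
    have "card Z = 0" using arity_ok_not_M[OF that N] card_U \<open>1 \<le> card X1\<close> by linarith
    then show ?thesis using Zf has_ID_has_M that by auto
  qed
  have R1: "cond_rule g X1 (Cond (I pol a0) (cneg Q))"
  proof (rule cond_rule_semI)
    show "arity_ok g (card X1)" using arity_ok_mono[OF N \<open>1 \<le> card X1\<close>] card_U by simp
    show "ceval v (consequent (Cond (I pol a0) (cneg Q)))"
      if "closed_val g v" "\<forall>x\<in>X1. ceval v (consequent x)" for v
      using uniform_interp_cneg(1)[OF Uc that(1)] evc that(2) by simp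
    show "ceval v (consequent x)"
      if "\<not> has_M g" "closed_val g v" "ceval v (consequent (Cond (I pol a0) (cneg Q)))" "x \<in> X1"
      for v x
    proof -
      have "ceval v \<psi>" using Q\<psi> that(2,3) unfolding entails_def by simp
      then have "ceval v (consequent e)"
        using not_M[OF that(1)] unfolding \<psi>_def by (simp add: ceval_id_hyp)
      then show ?thesis using E that unfolding X1_def by blast
    qed
  qed (use fX1 X1C A ant0 in \<open>auto simp: X1_def\<close>)
  have R2: "cond_rule g (insert (Cond (I pol a0) (cneg Q)) Z) e"
  proof (rule cond_rule_semI)
    have "card (insert (Cond (I pol a0) (cneg Q)) Z) \<le> card Z + 1"
      using Zf by (simp add: card_insert_if)
    moreover have "1 \<le> card (insert (Cond (I pol a0) (cneg Q)) Z)"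
      using Zf by (simp add: Suc_le_eq card_gt_0_iff)
    ultimately show "arity_ok g (card (insert (Cond (I pol a0) (cneg Q)) Z))"
      using arity_ok_mono[OF N] card_U \<open>1 \<le> card X1\<close> by simp
    show "ceval v (consequent e)"
      if "closed_val g v" "has_ID g \<longrightarrow> ceval v (antecedent e)"
        "\<forall>x\<in>insert (Cond (I pol a0) (cneg Q)) Z. ceval v (consequent x)" for v
    proof -
      have "ceval v (cneg Q)" and Zv: "\<forall>z\<in>Z. ceval v (consequent z)" using that(3) by auto
      then have "ceval v \<psi>" using Q\<psi> that(1) unfolding entails_def by blast
      then show ?thesis using that(2) Zv Zf unfolding \<psi>_def by (simp add: ceval_id_hyp)
    qed
    show "ceval v (consequent x)"
      if "\<not> has_M g" "closed_val g v" "ceval v (consequent e)"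
        "x \<in> insert (Cond (I pol a0) (cneg Q)) Z"
      for v x
    proof -
      have "\<forall>x\<in>X1. ceval v (consequent x)" using E that(1-3) unfolding X1_def by blast
      then have "ceval v (cneg Q)" using evc uniform_interp_cneg(1)[OF Uc that(2)] by blast
      then show ?thesis using not_M[OF that(1)] that(4) by simp
    qed
  qed (use Zf eC A ant0 in auto)
  have "Cond (I pol a0) (cneg Q) \<in> free p (\<not> pol)"
    using uniform_interpD(1)[OF Ua] uniform_interpD(1)[OF Uc] unfolding free_def by simp
  moreover have "ex_cond pol X1 = Cond (I pol a0) (cneg Q)"
    unfolding ex_cond_def a0_def c_def Q_def ..
  ultimately show ?thesis using R1 R2 unfolding X1_def by simp
qed

lemma rule_factor_all_cond:
  assumes Zf: "finite Z" and ZP: "Z \<subseteq> free p pol"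
    and Xd: "\<forall>x\<in>X. cond_depth x \<le> n" and dd: "cond_depth d \<le> n" and Z1: "Z - X \<noteq> {}"
    and R: "cond_rule g (Z \<union> X) d"
  shows "all_cond pol X d \<in> free p pol \<and> cond_rule g (Z - X) (all_cond pol X d) \<and>
    cond_rule g (insert (all_cond pol X d) X) d"
proof -
  define Z1 where "Z1 = Z - X"
  define ah where "ah = I (\<not> pol) (antecedent d)"
  define f where "f = CImp (CAnd (id_hyp g d) (cconj (consequent ` X))) (consequent d)"
  define bh where "bh = I pol f"
  have h: "all_cond pol X d = Cond ah bh" unfolding all_cond_def ah_def bh_def f_def ..
  obtain
    fin: "finite (Z \<union> X)" and dC: "is_cond d" and N: "arity_ok g (card (Z \<union> X))" and
    A: "\<forall>x\<in>Z \<union> X. is_cond x \<and>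
          (\<forall>v. closed_val g v \<longrightarrow> ceval v (antecedent x) = ceval v (antecedent d))" and
    S: "\<forall>v. closed_val g v \<longrightarrow> (has_ID g \<longrightarrow> ceval v (antecedent d)) \<longrightarrow>
          (\<forall>x\<in>Z \<union> X. ceval v (consequent x)) \<longrightarrow> ceval v (consequent d)" and
    E: "\<not> has_M g \<longrightarrow>
          (\<forall>v. closed_val g v \<longrightarrow> ceval v (consequent d) \<longrightarrow> (\<forall>x\<in>Z \<union> X. ceval v (consequent x)))"
    using cond_rule_semE[OF R] .
  have fX: "finite X" and fZ1: "finite Z1" and U: "Z \<union> X = Z1 \<union> X"
    using fin unfolding Z1_def by auto
  have "Z1 \<noteq> {}" using Z1 unfolding Z1_def .
  then obtain z0 where z0: "z0 \<in> Z1" by blast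
  have card_U: "card (Z \<union> X) = card Z1 + card X"
    unfolding U using fZ1 fX by (intro card_Un_disjoint) (auto simp: Z1_def)
  have "1 \<le> card Z1" using fZ1 z0 by (auto simp: Suc_le_eq card_gt_0_iff)
  have XC: "\<forall>x\<in>X. is_cond x \<and> cond_depth x \<le> n" using A Xd by blast
  have "cond_depth (antecedent d) < n" "cond_depth (consequent d) < n"
    using cond_depth_cond[OF dC] dd by auto
  moreover have "cond_depth (id_hyp g d) < n" using calculation unfolding id_hyp_def by simp
  moreover have "cond_depth (cconj (consequent ` X)) < n"
    using cond_depth_cconj_consequents[OF fX XC] calculation by simp
  ultimately have Ua: "uniform_interp g p (\<not> pol) (antecedent d) ah"
    and Ub: "uniform_interp g p pol f bh"
    using interp unfolding ah_def bh_def f_def by simp_all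
  have Zfree: "p \<notin> cV (\<not> pol) (antecedent z) \<and> p \<notin> cV pol (consequent z)" if "z \<in> Z" for z
    using ZP that A cV_cond[of z pol] unfolding free_def by auto
  have z0Z: "z0 \<in> Z" using z0 unfolding Z1_def by blast
  have eq: "ceval v (antecedent d) = ceval v (antecedent z0)" if "closed_val g v" for v
    using A z0Z that by auto
  have ant: "ceval v ah = ceval v (antecedent d)" if "closed_val g v" for v
    using uniform_interp_equiv[OF Ua conjunct1[OF Zfree[OF z0Z]] eq that] eq[OF that] by simp
  have evf: "ceval v f = ((has_ID g \<longrightarrow> ceval v (antecedent d)) \<longrightarrow>
      (\<forall>x\<in>X. ceval v (consequent x)) \<longrightarrow> ceval v (consequent d))" for v
    unfolding f_def using fX by (auto simp: ceval_id_hyp)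
  define \<psi> where "\<psi> = cconj (consequent ` Z1)"
  have ev\<psi>: "ceval v \<psi> = (\<forall>x\<in>Z1. ceval v (consequent x))" for v
    unfolding \<psi>_def using fZ1 by simp
  have "p \<notin> cV pol \<psi>" using fZ1 Zfree unfolding \<psi>_def Z1_def by auto
  moreover have "entails g \<psi> f"
    using S unfolding entails_def ev\<psi> evf U by blast
  ultimately have \<psi>b: "entails g \<psi> bh" by (rule uniform_interpD(4)[OF Ub])
  \<comment> \<open>in E and EN a rule has a single premise\<close>
  have not_M: "X = {} \<and> \<not> has_ID g" if "\<not> has_M g"
  proof -
    have "card X = 0" using arity_ok_not_M[OF that N] card_U \<open>1 \<le> card Z1\<close> by linarith
    then show ?thesis using fX has_ID_has_M that by auto
  qed
  have R1: "cond_rule g Z1 (Cond ah bh)"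
  proof (rule cond_rule_semI)
    show "arity_ok g (card Z1)"
      using arity_ok_mono[OF N \<open>1 \<le> card Z1\<close>] card_U by simp
    show "ceval v (consequent (Cond ah bh))"
      if "closed_val g v" "\<forall>x\<in>Z1. ceval v (consequent x)" for v
      using \<psi>b that unfolding entails_def ev\<psi> by simp
    show "ceval v (consequent x)"
      if nM: "\<not> has_M g" and v: "closed_val g v" "ceval v (consequent (Cond ah bh))"
        and x: "x \<in> Z1" for v x
    proof -
      have "ceval v f" using uniform_interpD(3)[OF Ub] v by simp
      then have "ceval v (consequent d)" using not_M[OF nM] by (simp add: evf)
      then show ?thesis using E nM v(1) x unfolding Z1_def by blast
    qed
  qed (use fZ1 A ant in \<open>auto simp: Z1_def\<close>)
  have R2: "cond_rule g (insert (Cond ah bh) X) d"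
  proof (rule cond_rule_semI)
    have "card (insert (Cond ah bh) X) \<le> card X + 1" using fX by (simp add: card_insert_if)
    moreover have "1 \<le> card (insert (Cond ah bh) X)" using fX by (simp add: Suc_le_eq card_gt_0_iff)
    ultimately show "arity_ok g (card (insert (Cond ah bh) X))"
      using arity_ok_mono[OF N] card_U \<open>1 \<le> card Z1\<close> by simp
    show "ceval v (consequent d)"
      if "closed_val g v" "has_ID g \<longrightarrow> ceval v (antecedent d)"
        "\<forall>x\<in>insert (Cond ah bh) X. ceval v (consequent x)" for v
    proof -
      have "ceval v f" using uniform_interpD(3)[OF Ub that(1)] that(3) by simp
      then show ?thesis using that(2,3) by (simp add: evf)
    qed
    show "ceval v (consequent x)"
      if nM: "\<not> has_M g" and v: "closed_val g v" "ceval v (consequent d)"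
        and x: "x \<in> insert (Cond ah bh) X" for v x
    proof -
      have "ceval v \<psi>" using E nM v unfolding ev\<psi> Z1_def by blast
      then have "ceval v bh" using \<psi>b v(1) unfolding entails_def by blast
      then show ?thesis using not_M[OF nM] x by simp
    qed
  qed (use fX dC A XC ant in auto)
  have "Cond ah bh \<in> free p pol"
    using uniform_interpD(1)[OF Ua] uniform_interpD(1)[OF Ub] unfolding free_def by simp
  then show ?thesis using R1 R2 h unfolding Z1_def by simp
qed

definition p_comps :: "bool \<Rightarrow> cfm \<Rightarrow> cfm set" where
  "p_comps b \<phi> = {x \<in> comps b \<phi>. p \<in> cVall x}"

definition all_p_comps :: "cfm \<Rightarrow> cfm set" where
  "all_p_comps \<phi> = p_comps True \<phi> \<union> p_comps False \<phi>"

definition ex_conds :: "bool \<Rightarrow> cfm \<Rightarrow> cfm set \<Rightarrow> cfm set" where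
  "ex_conds pol \<phi> X = {ex_cond pol X' | X'. X' \<subseteq> p_comps False \<phi> \<inter> X \<and> X' \<noteq> {} \<and>
     ex_cond pol X' \<in> free p (\<not> pol) \<and> cond_rule g X' (ex_cond pol X')}"

definition all_conds :: "bool \<Rightarrow> cfm \<Rightarrow> cfm set \<Rightarrow> cfm set" where
  "all_conds pol \<phi> X = {all_cond pol X' d | X' d.
     X' \<subseteq> p_comps False \<phi> \<inter> X \<and> d \<in> p_comps True \<phi> - X \<and>
     all_cond pol X' d \<in> free p pol \<and> cond_rule g (insert (all_cond pol X' d) X') d}"

definition blocked :: "cfm \<Rightarrow> cfm set \<Rightarrow> bool" where
  "blocked \<phi> X \<longleftrightarrow> (\<exists>X'\<subseteq>p_comps False \<phi> \<inter> X. \<exists>d\<in>p_comps True \<phi> - X. cond_rule g X' d)"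

text \<open>For a guess X of the true components of \<phi> that contain p, the guard collects what a
  closed valuation making exactly X true forces on formulas free of p in polarity \<open>\<not> pol\<close>.\<close>
definition guard_conjuncts :: "bool \<Rightarrow> cfm \<Rightarrow> cfm set \<Rightarrow> cfm set" where
  "guard_conjuncts pol \<phi> X = p_comps False \<phi> \<inter> X \<inter> free p (\<not> pol) \<union>
     cneg ` ((p_comps True \<phi> - X) \<inter> free p pol) \<union> ex_conds pol \<phi> X \<union> cneg ` all_conds pol \<phi> X \<union>
     (if blocked \<phi> X then {CBot} else {})"

definition interp_formula :: "bool \<Rightarrow> cfm \<Rightarrow> cfm" where
  "interp_formula pol \<phi> = cconj ((\<lambda>X. CImp (cconj (guard_conjuncts pol \<phi> X))
     (subst_comps (all_p_comps \<phi>) X \<phi>)) ` Pow (all_p_comps \<phi>))"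

lemma ex_condsE:
  assumes "y \<in> ex_conds pol \<phi> X"
  obtains X' where "y = ex_cond pol X'" "X' \<subseteq> p_comps False \<phi> \<inter> X" "X' \<noteq> {}"
    "y \<in> free p (\<not> pol)" "cond_rule g X' y"
  using assms unfolding ex_conds_def by blast

lemma all_condsE:
  assumes "h \<in> all_conds pol \<phi> X"
  obtains X' d where "h = all_cond pol X' d" "X' \<subseteq> p_comps False \<phi> \<inter> X" "d \<in> p_comps True \<phi> - X"
    "h \<in> free p pol" "cond_rule g (insert h X') d"
  using assms unfolding all_conds_def by blast

lemma finite_p_comps [simp]: "finite (p_comps b \<phi>)"
  unfolding p_comps_def by simp

lemma cond_depth_p_comps: "x \<in> p_comps b \<phi> \<Longrightarrow> cond_depth x \<le> cond_depth \<phi>"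
  unfolding p_comps_def using cond_depth_comps by blast

lemma comps_all_p_comps:
  assumes "x \<in> comps b \<phi>"
  shows "x \<in> all_p_comps \<phi> \<longleftrightarrow> x \<in> p_comps b \<phi>" and "x \<notin> all_p_comps \<phi> \<Longrightarrow> x \<in> free p c"
  using assms unfolding all_p_comps_def p_comps_def free_def cVall_def by (cases b; cases c; auto)+

lemma finite_guard_conjuncts: "finite (guard_conjuncts pol \<phi> X)"
proof -
  have "ex_conds pol \<phi> X \<subseteq> ex_cond pol ` Pow (p_comps False \<phi>)"
    unfolding ex_conds_def by auto
  then have "finite (ex_conds pol \<phi> X)" by (rule finite_subset) simp
  have "all_conds pol \<phi> X \<subseteq>
      (\<lambda>(X', d). all_cond pol X' d) ` (Pow (p_comps False \<phi>) \<times> p_comps True \<phi>)"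
    unfolding all_conds_def by auto
  then have "finite (all_conds pol \<phi> X)" by (rule finite_subset) simp
  with \<open>finite (ex_conds pol \<phi> X)\<close> show ?thesis
    unfolding guard_conjuncts_def by simp
qed

lemma ceval_guard:
  "ceval w (cconj (guard_conjuncts pol \<phi> X)) \<longleftrightarrow>
     (\<forall>x\<in>p_comps False \<phi> \<inter> X \<inter> free p (\<not> pol). w x) \<and> (\<forall>x\<in>(p_comps True \<phi> - X) \<inter> free p pol. \<not> w x) \<and>
     (\<forall>y\<in>ex_conds pol \<phi> X. w y) \<and> (\<forall>h\<in>all_conds pol \<phi> X. \<not> w h) \<and> \<not> blocked \<phi> X"
  (is "_ \<longleftrightarrow> ?R")
proof -
  have comp: "ceval w x = w x" if "x \<in> p_comps b \<phi>" for x b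
    using that ceval_comps unfolding p_comps_def by blast
  have comps_F: "(\<forall>x\<in>p_comps False \<phi> \<inter> X \<inter> free p (\<not> pol). ceval w x) \<longleftrightarrow>
      (\<forall>x\<in>p_comps False \<phi> \<inter> X \<inter> free p (\<not> pol). w x)"
    using comp by blast
  have comps_T: "(\<forall>x\<in>(p_comps True \<phi> - X) \<inter> free p pol. \<not> ceval w x) \<longleftrightarrow>
      (\<forall>x\<in>(p_comps True \<phi> - X) \<inter> free p pol. \<not> w x)"
    using comp by blast
  have cond: "ceval w y = w y" if "y \<in> ex_conds pol \<phi> X \<or> y \<in> all_conds pol \<phi> X" for y
    using that unfolding ex_conds_def all_conds_def ex_cond_def all_cond_def by auto
  have "ceval w (cconj (guard_conjuncts pol \<phi> X)) \<longleftrightarrow> (\<forall>y\<in>guard_conjuncts pol \<phi> X. ceval w y)"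
    using finite_guard_conjuncts by simp
  also have "\<dots> \<longleftrightarrow> ?R"
    unfolding guard_conjuncts_def ball_Un by (auto simp: comps_F comps_T cond split: if_splits)
  finally show ?thesis .
qed

lemma ceval_interp_formula:
  "ceval w (interp_formula pol \<phi>) \<longleftrightarrow> (\<forall>X\<subseteq>all_p_comps \<phi>.
     ceval w (cconj (guard_conjuncts pol \<phi> X)) \<longrightarrow> ceval w (subst_comps (all_p_comps \<phi>) X \<phi>))"
proof -
  have "finite (all_p_comps \<phi>)" unfolding all_p_comps_def by simp
  then show ?thesis unfolding interp_formula_def by auto
qed

lemma interp_formula_entails: "entails g (interp_formula pol \<phi>) \<phi>"
  unfolding entails_def
proof (intro allI impI)
  fix w assume w: "closed_val g w" and A: "ceval w (interp_formula pol \<phi>)"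
  define X where "X = {x \<in> all_p_comps \<phi>. w x}"
  have out: "\<not> w d" if "d \<in> p_comps True \<phi> - X" for d
    using that unfolding X_def all_p_comps_def by auto
  have true: "\<forall>x\<in>X'. w x" if "X' \<subseteq> p_comps False \<phi> \<inter> X" for X'
    using that unfolding X_def by blast
  have "ceval w (cconj (guard_conjuncts pol \<phi> X))"
    unfolding ceval_guard
  proof (intro conjI ballI notI)
    show "w y" if y: "y \<in> ex_conds pol \<phi> X" for y
    proof -
      obtain X' where X': "X' \<subseteq> p_comps False \<phi> \<inter> X" and R: "cond_rule g X' y"
        using ex_condsE[OF y] by blast
      show ?thesis using closed_valD[OF w R true[OF X']] .
    qed
    show False if h: "h \<in> all_conds pol \<phi> X" "w h" for h
    proof -
      obtain X' d where X': "X' \<subseteq> p_comps False \<phi> \<inter> X" and d: "d \<in> p_comps True \<phi> - X"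
        and R: "cond_rule g (insert h X') d"
        using all_condsE[OF h(1)] by blast
      have "w d" using closed_valD[OF w R] true[OF X'] h(2) by blast
      then show False using out[OF d] by blast
    qed
    show False if b: "blocked \<phi> X"
    proof -
      obtain X' d where X': "X' \<subseteq> p_comps False \<phi> \<inter> X" and d: "d \<in> p_comps True \<phi> - X"
        and R: "cond_rule g X' d"
        using b unfolding blocked_def by blast
      show False using closed_valD[OF w R true[OF X']] out[OF d] by blast
    qed
    show "w x" if "x \<in> p_comps False \<phi> \<inter> X \<inter> free p (\<not> pol)" for x
      using that unfolding X_def by blast
    show False if "x \<in> (p_comps True \<phi> - X) \<inter> free p pol" "w x" for x
      using that out by blast
  qed
  moreover have "X \<subseteq> all_p_comps \<phi>" unfolding X_def by blast
  ultimately have "ceval w (subst_comps (all_p_comps \<phi>) X \<phi>)"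
    using A unfolding ceval_interp_formula by blast
  moreover have "(\<lambda>x. if x \<in> all_p_comps \<phi> then x \<in> X else w x) = w"
    unfolding X_def by auto
  ultimately show "ceval w \<phi>" by (simp add: ceval_subst_comps)
qed

lemma cV_ex_cond:
  assumes "finite X" "X \<noteq> {}" "\<forall>x\<in>X. is_cond x \<and> cond_depth x \<le> n"
  shows "cV e (ex_cond pol X) \<subseteq> (\<Union>x\<in>X. cV e x)"
proof -
  define x0 where "x0 = (SOME x. x \<in> X)"
  define c where "c = cconj (consequent ` X)"
  have x0: "x0 \<in> X" using assms(2) unfolding x0_def by (simp add: some_in_eq)
  then have "0 < n" "cond_depth (antecedent x0) < n"
    using assms(3) cond_depth_cond by fastforce+
  then have I1: "cV (\<not> e) (I pol (antecedent x0)) \<subseteq> cV (\<not> e) (antecedent x0)"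
    using uniform_interpD(2)[OF interp] by blast
  have "cond_depth (cneg c) < n"
    using cond_depth_cconj_consequents[OF assms(1,3) \<open>0 < n\<close>] unfolding c_def by simp
  then have I2: "cV (\<not> e) (I pol (cneg c)) \<subseteq> cV e c"
    using uniform_interpD(2)[OF interp[of "cneg c" pol], of "\<not> e"] by simp
  have "cV (\<not> e) (antecedent x0) \<subseteq> cV e x0" using cV_cond assms(3) x0 by auto
  moreover have "cV e c \<subseteq> (\<Union>x\<in>X. cV e x)" using cV_cond assms(1,3) unfolding c_def by auto
  ultimately show ?thesis
    unfolding ex_cond_def x0_def[symmetric] c_def[symmetric] using I1 I2 x0 by auto
qed

lemma cV_all_cond:
  assumes "finite X" "\<forall>x\<in>X. is_cond x \<and> cond_depth x \<le> n" "is_cond d" "cond_depth d \<le> n"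
  shows "cV e (all_cond pol X d) \<subseteq> cV e d \<union> (\<Union>x\<in>X. cV (\<not> e) x)"
proof -
  define c where "c = cconj (consequent ` X)"
  define f where "f = CImp (CAnd (id_hyp g d) c) (consequent d)"
  have "cond_depth (antecedent d) < n" "cond_depth (consequent d) < n"
    using cond_depth_cond[OF assms(3)] assms(4) by auto
  moreover have "cond_depth c < n"
    using cond_depth_cconj_consequents[OF assms(1,2)] calculation unfolding c_def by simp
  ultimately have "cond_depth f < n" unfolding f_def id_hyp_def by simp
  then have If: "cV e (I pol f) \<subseteq> cV e f"
    using uniform_interpD(2)[OF interp] by blast
  have Ia: "cV (\<not> e) (I (\<not> pol) (antecedent d)) \<subseteq> cV (\<not> e) (antecedent d)"
    using uniform_interpD(2)[OF interp] \<open>cond_depth (antecedent d) < n\<close> by blast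
  have "cV (\<not> e) c \<subseteq> (\<Union>x\<in>X. cV (\<not> e) x)" using cV_cond assms(1,2) unfolding c_def by auto
  moreover have "cV (\<not> e) (id_hyp g d) \<subseteq> cV (\<not> e) (antecedent d)" unfolding id_hyp_def by simp
  ultimately have "cV e f \<subseteq> cV e d \<union> (\<Union>x\<in>X. cV (\<not> e) x)"
    unfolding f_def using cV_cond[OF assms(3)] by auto
  then show ?thesis
    unfolding all_cond_def c_def[symmetric] f_def[symmetric]
      using If Ia cV_cond[OF assms(3), of e] by auto
qed

lemma cV_guard_conjunct:
  assumes "cond_depth \<phi> \<le> n" "y \<in> guard_conjuncts pol \<phi> X"
  shows "cV e y \<subseteq> cV (\<not> e) \<phi> \<and> p \<notin> cV (\<not> pol) y"
proof -
  have comp: "cV e x \<subseteq> cV (b = e) \<phi>" "cond_depth x \<le> n" if "x \<in> p_comps b \<phi>" for x b e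
    using that cV_comps cond_depth_comps assms(1) unfolding p_comps_def by fastforce+
  consider "y \<in> p_comps False \<phi> \<inter> X \<inter> free p (\<not> pol)"
    | x where "y = cneg x" "x \<in> (p_comps True \<phi> - X) \<inter> free p pol"
    | "y \<in> ex_conds pol \<phi> X" | h where "y = cneg h" "h \<in> all_conds pol \<phi> X" | "y = CBot"
    using assms(2) unfolding guard_conjuncts_def by (auto split: if_splits)
  then show ?thesis
  proof cases
    case 1
    then show ?thesis using comp(1)[of y False e] unfolding free_def by auto
  next
    case (2 x)
    then show ?thesis using comp(1)[of x True "\<not> e"] unfolding free_def by auto
  next
    case 3
    then obtain X' where X': "y = ex_cond pol X'" "X' \<subseteq> p_comps False \<phi> \<inter> X" "X' \<noteq> {}"
      "y \<in> free p (\<not> pol)" "cond_rule g X' y"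
      by (rule ex_condsE)
    have "finite X'" using cond_ruleD(1)[OF X'(5)] .
    moreover have "\<forall>x\<in>X'. is_cond x \<and> cond_depth x \<le> n"
    proof
      fix x assume "x \<in> X'"
      then have "is_cond x" "x \<in> p_comps False \<phi>" using cond_ruleD(4)[OF X'(5)] X'(2) by auto
      then show "is_cond x \<and> cond_depth x \<le> n" using comp(2) by blast
    qed
    ultimately have "cV e y \<subseteq> (\<Union>x\<in>X'. cV e x)" unfolding X'(1) using X'(3) by (simp add: cV_ex_cond)
    also have "\<dots> \<subseteq> cV (\<not> e) \<phi>" using X'(2) comp(1)[of _ False e] by auto
    finally show ?thesis using X'(4) unfolding free_def by blast
  next
    case (4 h)
    then obtain X' d where X': "h = all_cond pol X' d" "X' \<subseteq> p_comps False \<phi> \<inter> X"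
      "d \<in> p_comps True \<phi> - X" "h \<in> free p pol" "cond_rule g (insert h X') d"
      by (auto elim: all_condsE)
    have "finite X'" using cond_ruleD(1)[OF X'(5)] by simp
    moreover have "\<forall>x\<in>X'. is_cond x \<and> cond_depth x \<le> n"
    proof
      fix x assume "x \<in> X'"
      then have "is_cond x" "x \<in> p_comps False \<phi>" using cond_ruleD(4)[OF X'(5)] X'(2) by auto
      then show "is_cond x \<and> cond_depth x \<le> n" using comp(2) by blast
    qed
    moreover have "is_cond d" "cond_depth d \<le> n" using cond_ruleD(2)[OF X'(5)] X'(3) comp(2) by auto
    ultimately have "cV (\<not> e) h \<subseteq> cV (\<not> e) d \<union> (\<Union>x\<in>X'. cV e x)"
      using cV_all_cond[of X' d "\<not> e" pol] unfolding X'(1) by simp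
    also have "\<dots> \<subseteq> cV (\<not> e) \<phi>"
      using X'(2,3) comp(1)[of _ False e] comp(1)[of d True "\<not> e"] by auto
    finally show ?thesis using 4 X'(4) unfolding free_def by simp
  qed simp
qed

lemma cV_subst_p_comps:
  assumes "q \<in> cV e (subst_comps (all_p_comps \<phi>) X \<phi>)"
  shows "q \<in> cV e \<phi> \<and> q \<noteq> p"
proof -
  obtain b x where x: "x \<in> comps b \<phi>" "x \<notin> all_p_comps \<phi>" "q \<in> cV (b = e) x"
    using cV_subst_comps[OF assms] by blast
  have "cV (b = e) x \<subseteq> cV e \<phi>" using cV_comps[OF x(1), of "b = e"] by (cases b) auto
  moreover have "p \<notin> cV (b = e) x"
    using x(1,2) unfolding all_p_comps_def p_comps_def cVall_def by (cases b; cases e) auto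
  ultimately show ?thesis using x(3) by blast
qed

lemma interp_formula_vars:
  assumes "cond_depth \<phi> \<le> n"
  shows "p \<notin> cV pol (interp_formula pol \<phi>)" "cV e (interp_formula pol \<phi>) \<subseteq> cV e \<phi>"
proof -
  have "finite (all_p_comps \<phi>)" unfolding all_p_comps_def by simp
  then have cV_A: "cV e (interp_formula pol \<phi>) = (\<Union>X\<in>Pow (all_p_comps \<phi>).
      cV (\<not> e) (cconj (guard_conjuncts pol \<phi> X)) \<union> cV e (subst_comps (all_p_comps \<phi>) X \<phi>))" for e
    unfolding interp_formula_def by simp
  have guard: "cV (\<not> e) (cconj (guard_conjuncts pol \<phi> X)) \<subseteq> cV e \<phi>"
    "p \<notin> cV (\<not> pol) (cconj (guard_conjuncts pol \<phi> X))" for e X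
    using cV_guard_conjunct[OF assms, of _ pol X "\<not> e"] finite_guard_conjuncts by auto
  show "p \<notin> cV pol (interp_formula pol \<phi>)"
    unfolding cV_A using guard(2) cV_subst_p_comps by blast
  show "cV e (interp_formula pol \<phi>) \<subseteq> cV e \<phi>"
    unfolding cV_A using guard(1) cV_subst_p_comps by blast
qed

definition guess_base :: "bool \<Rightarrow> cfm \<Rightarrow> cfm set \<Rightarrow> (cfm \<Rightarrow> bool) \<Rightarrow> cfm set" where
  "guess_base pol \<phi> X w = p_comps False \<phi> \<inter> X \<union> {y \<in> free p pol. w y}"

lemma guess_base_split:
  assumes "ds \<subseteq> guess_base pol \<phi> X w" "finite ds"
  obtains Z X' where "ds = Z \<union> X'" "finite Z" "Z \<subseteq> free p pol" "\<forall>z\<in>Z. w z"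
    "X' \<subseteq> p_comps False \<phi> \<inter> X"
proof -
  define Z where "Z = {y \<in> ds. y \<in> free p pol \<and> w y}"
  have "ds = Z \<union> (ds - Z)" "finite Z" "Z \<subseteq> free p pol" "\<forall>z\<in>Z. w z" "ds - Z \<subseteq> p_comps False \<phi> \<inter> X"
    using assms unfolding Z_def guess_base_def by auto
  then show ?thesis using that by blast
qed

lemma guess_closure_free_true:
  assumes "cond_depth \<phi> \<le> n" "closed_val g w" "ceval w (cconj (guard_conjuncts pol \<phi> X))"
    "x \<in> free p (\<not> pol)" "rule_closure g (guess_base pol \<phi> X w) x"
  shows "w x"
  using assms(5)
proof (cases rule: rule_closureE)
  case 1
  then have "x \<in> p_comps False \<phi> \<inter> X \<or> w x" unfolding guess_base_def by blast
  then show ?thesis using assms(3,4) unfolding ceval_guard by blast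
next
  case (2 ds)
  obtain Z X' where ZX: "ds = Z \<union> X'" "finite Z" "Z \<subseteq> free p pol" "\<forall>z\<in>Z. w z"
    "X' \<subseteq> p_comps False \<phi> \<inter> X"
    using guess_base_split[OF 2(2) cond_ruleD(1)[OF 2(3)]] by blast
  have R: "cond_rule g (Z \<union> X') x" using 2(3) ZX(1) by simp
  show ?thesis
  proof (cases "X' - Z = {}")
    case True
    then have "cond_rule g Z x" using R by (simp add: Un_absorb2)
    then show ?thesis using closed_valD[OF assms(2)] ZX(4) by blast
  next
    case False
    have "\<forall>x\<in>X'. cond_depth x \<le> n" using ZX(5) cond_depth_p_comps assms(1) by fastforce
    from rule_factor_ex_cond[OF ZX(2,3) this False assms(4) R]
    have ex: "ex_cond pol (X' - Z) \<in> free p (\<not> pol)" "cond_rule g (X' - Z) (ex_cond pol (X' - Z))"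
      "cond_rule g (insert (ex_cond pol (X' - Z)) Z) x" by blast+
    have "ex_cond pol (X' - Z) \<in> ex_conds pol \<phi> X"
      unfolding ex_conds_def using ZX(5) False ex(1,2) by blast
    then have "w (ex_cond pol (X' - Z))" using assms(3) unfolding ceval_guard by blast
    then show ?thesis using closed_valD[OF assms(2) ex(3)] ZX(4) by blast
  qed
qed

lemma guess_closure_excludes:
  assumes "cond_depth \<phi> \<le> n" "closed_val g w" "ceval w (cconj (guard_conjuncts pol \<phi> X))"
    "d \<in> p_comps True \<phi> - X"
  shows "\<not> rule_closure g (guess_base pol \<phi> X w) d"
proof
  assume "rule_closure g (guess_base pol \<phi> X w) d"
  then show False
  proof (cases rule: rule_closureE)
    case 1
    then have "d \<in> free p pol" "w d" using assms(4) unfolding guess_base_def by auto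
    then show False using assms(3,4) unfolding ceval_guard by blast
  next
    case (2 ds)
    obtain Z X' where ZX: "ds = Z \<union> X'" "finite Z" "Z \<subseteq> free p pol" "\<forall>z\<in>Z. w z"
      "X' \<subseteq> p_comps False \<phi> \<inter> X"
      using guess_base_split[OF 2(2) cond_ruleD(1)[OF 2(3)]] by blast
    have R: "cond_rule g (Z \<union> X') d" using 2(3) ZX(1) by simp
    show False
    proof (cases "Z - X' = {}")
      case True
      then have "cond_rule g X' d" using R by (simp add: Un_absorb1)
      then have "blocked \<phi> X" unfolding blocked_def using ZX(5) assms(4) by blast
      then show False using assms(3) unfolding ceval_guard by blast
    next
      case False
      have "\<forall>x\<in>X'. cond_depth x \<le> n" using ZX(5) cond_depth_p_comps assms(1) by fastforce
      moreover have "cond_depth d \<le> n" using assms(1,4) cond_depth_p_comps by fastforce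
      ultimately have h: "all_cond pol X' d \<in> free p pol" "cond_rule g (Z - X') (all_cond pol X' d)"
        "cond_rule g (insert (all_cond pol X' d) X') d"
        using rule_factor_all_cond[OF ZX(2,3) _ _ False R] by blast+
      have "w (all_cond pol X' d)" using closed_valD[OF assms(2) h(2)] ZX(4) by blast
      moreover have "all_cond pol X' d \<in> all_conds pol \<phi> X"
        unfolding all_conds_def using ZX(5) assms(4) h(1,3) by blast
      ultimately show False using assms(3) unfolding ceval_guard by blast
    qed
  qed
qed

lemma interp_formula_least:
  assumes "cond_depth \<phi> \<le> n" "p \<notin> cV pol \<psi>" "entails g \<psi> \<phi>"
  shows "entails g \<psi> (interp_formula pol \<phi>)"
  unfolding entails_def
proof (intro allI impI)
  fix w assume w: "closed_val g w" and w\<psi>: "ceval w \<psi>"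
  show "ceval w (interp_formula pol \<phi>)"
    unfolding ceval_interp_formula
  proof (intro allI impI)
    fix X assume G: "ceval w (cconj (guard_conjuncts pol \<phi> X))"
    define u where "u = rule_closure g (guess_base pol \<phi> X w)"
    have free_w: "u x" if "x \<in> free p pol" "w x" for x
      using that unfolding u_def guess_base_def by (intro rule_closure_base) simp
    have guessed: "u x" if "x \<in> p_comps False \<phi> \<inter> X" for x
      using that unfolding u_def guess_base_def by (intro rule_closure_base) simp
    have free_u: "w x" if "x \<in> free p (\<not> pol)" "u x" for x
      using guess_closure_free_true[OF assms(1) w G that(1)] that(2) unfolding u_def .
    have not_guessed: "\<not> u x" if "x \<in> p_comps True \<phi> - X" for x
      using guess_closure_excludes[OF assms(1) w G that] unfolding u_def .
    have "ceval u \<psi>"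
    proof (rule ceval_comps_mono[OF _ _ w\<psi>])
      show "\<forall>x\<in>comps True \<psi>. w x \<longrightarrow> u x"
        using free_w cV_comps[of _ True \<psi> pol] assms(2) unfolding free_def by auto
      show "\<forall>x\<in>comps False \<psi>. u x \<longrightarrow> w x"
        using free_u cV_comps[of _ False \<psi> "\<not> pol"] assms(2) unfolding free_def by auto
    qed
    then have "ceval u \<phi>"
      using assms(3) closed_val_rule_closure unfolding entails_def u_def by blast
    then have "ceval (\<lambda>x. if x \<in> all_p_comps \<phi> then x \<in> X else w x) \<phi>"
    proof (rule ceval_comps_mono[rotated 2])
      show "\<forall>x\<in>comps True \<phi>. u x \<longrightarrow> (if x \<in> all_p_comps \<phi> then x \<in> X else w x)"
        using not_guessed free_u comps_all_p_comps[of _ True \<phi>] by auto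
      show "\<forall>x\<in>comps False \<phi>. (if x \<in> all_p_comps \<phi> then x \<in> X else w x) \<longrightarrow> u x"
        using guessed free_w comps_all_p_comps[of _ False \<phi>] by auto
    qed
    then show "ceval w (subst_comps (all_p_comps \<phi>) X \<phi>)" by (simp add: ceval_subst_comps)
  qed
qed

lemma interp_formula_uniform:
  "cond_depth \<phi> \<le> n \<Longrightarrow> uniform_interp g p pol \<phi> (interp_formula pol \<phi>)"
  unfolding uniform_interp_def
  using interp_formula_vars interp_formula_entails interp_formula_least by blast

end

lemma uniform_interp_exists: "\<exists>A. uniform_interp g p pol \<phi> A"
proof (induction "cond_depth \<phi>" arbitrary: \<phi> pol rule: less_induct)
  case less
  define I where "I b f = (SOME A. uniform_interp g p b f A)" for b f
  have "interpolants_below g p (cond_depth \<phi>) I"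
    by unfold_locales (use less in \<open>auto simp: I_def intro: someI_ex\<close>)
  then show ?case using interpolants_below.interp_formula_uniform by blast
qed

section \<open>Interpolation properties\<close>

theorem ULIP_CL: "ULIP cV CImp (CL g)"
  unfolding ULIP_def CImp_in_CL_iff
proof (intro allI conjI)
  fix \<phi> p pol
  obtain A where "uniform_interp g p pol \<phi> A" using uniform_interp_exists by blast
  then show "\<exists>A. p \<notin> cV pol A \<and> (\<forall>d. cV d A \<subseteq> cV d \<phi>) \<and> entails g A \<phi> \<and>
      (\<forall>\<psi>. p \<notin> cV pol \<psi> \<longrightarrow> entails g \<psi> \<phi> \<longrightarrow> entails g \<psi> A)"
    unfolding uniform_interp_def by blast
  obtain B where B: "uniform_interp g p (\<not> pol) (cneg \<phi>) B" using uniform_interp_exists by blast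
  show "\<exists>E. p \<notin> cV pol E \<and> (\<forall>d. cV d E \<subseteq> cV d \<phi>) \<and> entails g \<phi> E \<and>
      (\<forall>\<psi>. p \<notin> cV pol \<psi> \<longrightarrow> entails g \<phi> \<psi> \<longrightarrow> entails g E \<psi>)"
  proof (intro exI conjI allI impI)
    show "p \<notin> cV pol (cneg B)" using uniform_interpD(1)[OF B] by simp
    show "cV d (cneg B) \<subseteq> cV d \<phi>" for d using uniform_interpD(2)[OF B, of "\<not> d"] by simp
    show "entails g \<phi> (cneg B)" using uniform_interp_cneg(1)[OF B] unfolding entails_def by blast
    show "entails g (cneg B) \<psi>" if "p \<notin> cV pol \<psi>" "entails g \<phi> \<psi>" for \<psi>
      using uniform_interp_cneg(2)[OF B] that by simp
  qed
qed

lemma ULIP_UIP: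
  assumes U: "ULIP V imp L"
    and trans: "\<And>a b c. imp a b \<in> L \<Longrightarrow> imp b c \<in> L \<Longrightarrow> imp a c \<in> L"
  shows "UIP (\<lambda>f. V True f \<union> V False f) imp L"
  unfolding UIP_def
proof (intro allI conjI)
  fix \<phi> p
  obtain A1 where A1: "p \<notin> V False A1" "\<forall>d. V d A1 \<subseteq> V d \<phi>" "imp A1 \<phi> \<in> L"
    "\<forall>\<psi>. p \<notin> V False \<psi> \<longrightarrow> imp \<psi> \<phi> \<in> L \<longrightarrow> imp \<psi> A1 \<in> L"
    using U unfolding ULIP_def by blast
  obtain A2 where A2: "p \<notin> V True A2" "\<forall>d. V d A2 \<subseteq> V d A1" "imp A2 A1 \<in> L"
    "\<forall>\<psi>. p \<notin> V True \<psi> \<longrightarrow> imp \<psi> A1 \<in> L \<longrightarrow> imp \<psi> A2 \<in> L"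
    using U unfolding ULIP_def by blast
  show "\<exists>A. p \<notin> V True A \<union> V False A \<and> V True A \<union> V False A \<subseteq> V True \<phi> \<union> V False \<phi> \<and>
      imp A \<phi> \<in> L \<and> (\<forall>\<psi>. p \<notin> V True \<psi> \<union> V False \<psi> \<longrightarrow> imp \<psi> \<phi> \<in> L \<longrightarrow> imp \<psi> A \<in> L)"
    using A1 A2 trans[OF A2(3) A1(3)] by (intro exI[of _ A2]) blast
  obtain E1 where E1: "p \<notin> V False E1" "\<forall>d. V d E1 \<subseteq> V d \<phi>" "imp \<phi> E1 \<in> L"
    "\<forall>\<psi>. p \<notin> V False \<psi> \<longrightarrow> imp \<phi> \<psi> \<in> L \<longrightarrow> imp E1 \<psi> \<in> L"
    using U unfolding ULIP_def by blast
  obtain E2 where E2: "p \<notin> V True E2" "\<forall>d. V d E2 \<subseteq> V d E1" "imp E1 E2 \<in> L"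
    "\<forall>\<psi>. p \<notin> V True \<psi> \<longrightarrow> imp E1 \<psi> \<in> L \<longrightarrow> imp E2 \<psi> \<in> L"
    using U unfolding ULIP_def by blast
  show "\<exists>E. p \<notin> V True E \<union> V False E \<and> V True E \<union> V False E \<subseteq> V True \<phi> \<union> V False \<phi> \<and>
      imp \<phi> E \<in> L \<and> (\<forall>\<psi>. p \<notin> V True \<psi> \<union> V False \<psi> \<longrightarrow> imp \<phi> \<psi> \<in> L \<longrightarrow> imp E \<psi> \<in> L)"
    using E1 E2 trans[OF E1(3) E2(3)] by (intro exI[of _ E2]) blast
qed

text \<open>An interpolant is obtained by eliminating, one at a time, the finitely many polarised
  variables of the antecedent that do not occur in the consequent.\<close>
lemma ULIP_LIP:
  assumes U: "ULIP V imp L"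
    and trans: "\<And>a b c. imp a b \<in> L \<Longrightarrow> imp b c \<in> L \<Longrightarrow> imp a c \<in> L"
    and refl: "\<And>a. imp a a \<in> L"
    and fin: "\<And>d f. finite (V d f)"
  shows "LIP V imp L"
  unfolding LIP_def
proof (intro allI impI)
  fix \<phi> \<psi> assume H: "imp \<phi> \<psi> \<in> L"
  have elim: "\<exists>\<theta>. (\<forall>d. V d \<theta> \<subseteq> V d \<phi>) \<and> (\<forall>(q, d)\<in>S. q \<notin> V d \<theta>) \<and> imp \<phi> \<theta> \<in> L \<and> imp \<theta> \<psi> \<in> L"
    if "finite S" "\<forall>(q, d)\<in>S. q \<notin> V d \<psi>" for S
    using that
  proof (induction S rule: finite_induct)
    case empty
    show ?case using refl H by blast
  next
    case (insert qd S)
    obtain q d where qd: "qd = (q, d)" by fastforce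
    obtain \<theta> where \<theta>: "\<forall>d. V d \<theta> \<subseteq> V d \<phi>" "\<forall>(q, d)\<in>S. q \<notin> V d \<theta>" "imp \<phi> \<theta> \<in> L" "imp \<theta> \<psi> \<in> L"
      using insert.IH insert.prems by auto
    obtain E where E: "q \<notin> V d E" "\<forall>e. V e E \<subseteq> V e \<theta>" "imp \<theta> E \<in> L"
      "\<forall>\<chi>. q \<notin> V d \<chi> \<longrightarrow> imp \<theta> \<chi> \<in> L \<longrightarrow> imp E \<chi> \<in> L"
      using U unfolding ULIP_def by blast
    have "imp E \<psi> \<in> L" using E(4) \<theta>(4) insert.prems qd by auto
    moreover have "imp \<phi> E \<in> L" using trans \<theta>(3) E(3) by blast
    moreover have "\<forall>e. V e E \<subseteq> V e \<phi>" using E(2) \<theta>(1) by blast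
    moreover have "\<forall>(q', d')\<in>insert qd S. q' \<notin> V d' E" using E(1,2) \<theta>(2) qd by blast
    ultimately show ?case by blast
  qed
  define S where "S = {(q, d). q \<in> V d \<phi> \<and> q \<notin> V d \<psi>}"
  have "S \<subseteq> (\<Union>d. V d \<phi> \<times> {d})" unfolding S_def by auto
  then have "finite S" by (rule finite_subset) (simp add: fin)
  then obtain \<theta> where \<theta>: "\<forall>d. V d \<theta> \<subseteq> V d \<phi>" "\<forall>(q, d)\<in>S. q \<notin> V d \<theta>" "imp \<phi> \<theta> \<in> L" "imp \<theta> \<psi> \<in> L"
    using elim unfolding S_def by blast
  then have "\<forall>d. V d \<theta> \<subseteq> V d \<phi> \<inter> V d \<psi>" unfolding S_def by blast
  then show "\<exists>\<theta>. (\<forall>d. V d \<theta> \<subseteq> V d \<phi> \<inter> V d \<psi>) \<and> imp \<phi> \<theta> \<in> L \<and> imp \<theta> \<psi> \<in> L"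
    using \<theta> by blast
qed

lemma ULIP_all_interp_props:
  assumes "ULIP V imp L"
    and "\<And>a b c. imp a b \<in> L \<Longrightarrow> imp b c \<in> L \<Longrightarrow> imp a c \<in> L"
    and "\<And>a. imp a a \<in> L"
    and "\<And>d f. finite (V d f)"
  shows "all_interp_props V imp L"
  unfolding all_interp_props_def using assms ULIP_UIP ULIP_LIP by blast

theorem CL_all_interp_props: "all_interp_props cV CImp (CL g)"
proof (rule ULIP_all_interp_props[OF ULIP_CL])
  show "CImp a c \<in> CL g" if "CImp a b \<in> CL g" "CImp b c \<in> CL g" for a b c
    by (rule clogic_prop2[OF that]) auto
qed (auto intro: clogic_prop0)

section \<open>Modal logics\<close>

fun cond_of_modal :: "mfm \<Rightarrow> cfm" where
  "cond_of_modal (MAtom p) = CAtom p"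
| "cond_of_modal MBot = CBot"
| "cond_of_modal (MAnd a b) = CAnd (cond_of_modal a) (cond_of_modal b)"
| "cond_of_modal (MOr a b) = COr (cond_of_modal a) (cond_of_modal b)"
| "cond_of_modal (MImp a b) = CImp (cond_of_modal a) (cond_of_modal b)"
| "cond_of_modal (MBox a) = Cond CBot (cond_of_modal a)"

fun modal_of_cond :: "cfm \<Rightarrow> mfm" where
  "modal_of_cond (CAtom p) = MAtom p"
| "modal_of_cond CBot = MBot"
| "modal_of_cond (CAnd a b) = MAnd (modal_of_cond a) (modal_of_cond b)"
| "modal_of_cond (COr a b) = MOr (modal_of_cond a) (modal_of_cond b)"
| "modal_of_cond (CImp a b) = MImp (modal_of_cond a) (modal_of_cond b)"
| "modal_of_cond (Cond a b) = MBox (modal_of_cond b)"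

lemma modal_of_cond_of_modal [simp]: "modal_of_cond (cond_of_modal f) = f"
  by (induction f) auto

lemma cV_cond_of_modal [simp]: "cV d (cond_of_modal f) = mV d f"
  by (induction f arbitrary: d) auto

lemma mV_modal_of_cond: "mV d (modal_of_cond f) \<subseteq> cV d f"
  by (induction f arbitrary: d) auto

lemma ceval_cond_of_modal: "ceval v (cond_of_modal f) = meval (\<lambda>m. v (cond_of_modal m)) f"
  by (induction f) auto

lemma meval_modal_of_cond: "meval v (modal_of_cond f) = ceval (\<lambda>c. v (modal_of_cond c)) f"
  by (induction f) auto

lemma finite_mV: "finite (mV d f)"
  by (induction f arbitrary: d) auto

lemma mlogic_prop:
  assumes "finite F" "F \<subseteq> mlogic Ax" "\<And>v. \<forall>f\<in>F. meval v f \<Longrightarrow> meval v g"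
  shows "g \<in> mlogic Ax"
  using assms
proof (induction F arbitrary: g rule: finite_induct)
  case empty
  then show ?case by (auto intro: mlogic.taut simp: mtaut_def)
next
  case (insert f F)
  have "MImp f g \<in> mlogic Ax"
    using insert.IH insert.prems by auto
  moreover have "f \<in> mlogic Ax" using insert.prems by auto
  ultimately show ?case by (rule mlogic.mp[rotated])
qed

lemma mlogic_prop1: "a \<in> mlogic Ax \<Longrightarrow> (\<And>v. meval v a \<Longrightarrow> meval v g) \<Longrightarrow> g \<in> mlogic Ax"
  using mlogic_prop[of "{a}"] by auto

lemma cond_of_modal_derivable:
  assumes "f \<in> mlogic Axm" "\<And>a. a \<in> Axm \<Longrightarrow> cond_of_modal a \<in> clogic Axc"
  shows "cond_of_modal f \<in> clogic Axc"
  using assms(1)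
proof (induction rule: mlogic.induct)
  case (taut f)
  then show ?case by (auto intro!: clogic_prop0 simp: ceval_cond_of_modal mtaut_def)
next
  case (ax f)
  then show ?case using assms(2) by blast
next
  case (mp f g)
  then show ?case by (auto intro: clogic.mp)
next
  case (re f g)
  have "CIff (cond_of_modal f) (cond_of_modal g) \<in> clogic Axc"
    using re.IH by (simp add: MIff_def CIff_def)
  moreover have "CIff (cond_of_modal g) (cond_of_modal f) \<in> clogic Axc"
    by (rule clogic_prop1[OF calculation]) auto
  ultimately have "CImp (Cond CBot (cond_of_modal f)) (Cond CBot (cond_of_modal g)) \<in> clogic Axc"
    "CImp (Cond CBot (cond_of_modal g)) (Cond CBot (cond_of_modal f)) \<in> clogic Axc"
    by (simp_all add: clogic_Cond_cong)
  then have "CIff (Cond CBot (cond_of_modal f)) (Cond CBot (cond_of_modal g)) \<in> clogic Axc"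
    by (rule clogic_prop2) auto
  then show ?case by (simp add: MIff_def CIff_def)
qed

lemma modal_of_cond_derivable:
  assumes "f \<in> clogic Axc" "\<And>a. a \<in> Axc \<Longrightarrow> modal_of_cond a \<in> mlogic Axm"
  shows "modal_of_cond f \<in> mlogic Axm"
  using assms(1)
proof (induction rule: clogic.induct)
  case (taut f)
  then show ?case by (auto intro!: mlogic_prop[of "{}"] simp: meval_modal_of_cond ctaut_def)
next
  case (ax f)
  then show ?case using assms(2) by blast
next
  case (mp f g)
  then show ?case by (auto intro: mlogic.mp)
next
  case (re a0 a1 b0 b1)
  have "MIff (modal_of_cond b0) (modal_of_cond b1) \<in> mlogic Axm"
    using re.IH(2) by (simp add: MIff_def CIff_def)
  then have "MIff (MBox (modal_of_cond b0)) (MBox (modal_of_cond b1)) \<in> mlogic Axm"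
    by (rule mlogic.re)
  then show ?case by (rule mlogic_prop1) (simp add: MIff_def)
qed

lemma ULIP_modal_transfer:
  assumes U: "ULIP cV CImp (clogic Axc)"
    and to_cond: "\<And>a. a \<in> Axm \<Longrightarrow> cond_of_modal a \<in> clogic Axc"
    and to_modal: "\<And>a. a \<in> Axc \<Longrightarrow> modal_of_cond a \<in> mlogic Axm"
  shows "ULIP mV MImp (mlogic Axm)"
  unfolding ULIP_def
proof (intro allI conjI)
  fix \<phi> p pol
  have modal_imp: "MImp (modal_of_cond a) (modal_of_cond b) \<in> mlogic Axm"
    if "CImp a b \<in> clogic Axc" for a b
    using modal_of_cond_derivable[OF that to_modal] by simp
  have cond_imp: "CImp (cond_of_modal a) (cond_of_modal b) \<in> clogic Axc"
    if "MImp a b \<in> mlogic Axm" for a b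
    using cond_of_modal_derivable[OF that to_cond] by simp
  have vars: "p \<notin> mV pol (modal_of_cond A)" "mV d (modal_of_cond A) \<subseteq> mV d \<phi>"
    if "p \<notin> cV pol A" "\<forall>d. cV d A \<subseteq> cV d (cond_of_modal \<phi>)" for A d
    using that mV_modal_of_cond[of _ A] cV_cond_of_modal[of _ \<phi>] by blast+
  obtain A where A: "p \<notin> cV pol A" "\<forall>d. cV d A \<subseteq> cV d (cond_of_modal \<phi>)"
    "CImp A (cond_of_modal \<phi>) \<in> clogic Axc"
    "\<forall>\<psi>. p \<notin> cV pol \<psi> \<longrightarrow> CImp \<psi> (cond_of_modal \<phi>) \<in> clogic Axc \<longrightarrow> CImp \<psi> A \<in> clogic Axc"
    using U unfolding ULIP_def by blast
  show "\<exists>A. p \<notin> mV pol A \<and> (\<forall>d. mV d A \<subseteq> mV d \<phi>) \<and> MImp A \<phi> \<in> mlogic Axm \<and>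
      (\<forall>\<psi>. p \<notin> mV pol \<psi> \<longrightarrow> MImp \<psi> \<phi> \<in> mlogic Axm \<longrightarrow> MImp \<psi> A \<in> mlogic Axm)"
  proof (intro exI[of _ "modal_of_cond A"] conjI allI impI)
    show "MImp (modal_of_cond A) \<phi> \<in> mlogic Axm" using modal_imp[OF A(3)] by simp
    show "MImp \<psi> (modal_of_cond A) \<in> mlogic Axm" if "p \<notin> mV pol \<psi>" "MImp \<psi> \<phi> \<in> mlogic Axm" for \<psi>
      using modal_imp[of "cond_of_modal \<psi>" A] A(4) cond_imp[OF that(2)] that(1) by simp
  qed (use vars[OF A(1,2)] in auto)
  obtain E where E: "p \<notin> cV pol E" "\<forall>d. cV d E \<subseteq> cV d (cond_of_modal \<phi>)"
    "CImp (cond_of_modal \<phi>) E \<in> clogic Axc"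
    "\<forall>\<psi>. p \<notin> cV pol \<psi> \<longrightarrow> CImp (cond_of_modal \<phi>) \<psi> \<in> clogic Axc \<longrightarrow> CImp E \<psi> \<in> clogic Axc"
    using U unfolding ULIP_def by blast
  show "\<exists>E. p \<notin> mV pol E \<and> (\<forall>d. mV d E \<subseteq> mV d \<phi>) \<and> MImp \<phi> E \<in> mlogic Axm \<and>
      (\<forall>\<psi>. p \<notin> mV pol \<psi> \<longrightarrow> MImp \<phi> \<psi> \<in> mlogic Axm \<longrightarrow> MImp E \<psi> \<in> mlogic Axm)"
  proof (intro exI[of _ "modal_of_cond E"] conjI allI impI)
    show "MImp \<phi> (modal_of_cond E) \<in> mlogic Axm" using modal_imp[OF E(3)] by simp
    show "MImp (modal_of_cond E) \<psi> \<in> mlogic Axm" if "p \<notin> mV pol \<psi>" "MImp \<phi> \<psi> \<in> mlogic Axm" for \<psi>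
      using modal_imp[of E "cond_of_modal \<psi>"] E(4) cond_imp[OF that(2)] that(1) by simp
  qed (use vars[OF E(1,2)] in auto)
qed

definition modal_axioms :: "cond_logic \<Rightarrow> mfm set" where
  "modal_axioms g = (if has_M g then axM else {}) \<union> (if has_C g then axC else {}) \<union>
     (if has_N g then axN else {})"

lemma modal_axioms_to_cond: "a \<in> modal_axioms g \<Longrightarrow> cond_of_modal a \<in> CL g"
  by (rule clogic.ax)
    (auto simp: modal_axioms_def cond_axioms_def axM_def axC_def axN_def axCM_def axCC_def axCN_def
      MTop_def CTop_def split: if_splits)

lemma cond_axioms_to_modal:
  "\<not> has_ID g \<Longrightarrow> a \<in> cond_axioms g \<Longrightarrow> modal_of_cond a \<in> mlogic (modal_axioms g)"
  by (rule mlogic.ax)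
    (auto simp: modal_axioms_def cond_axioms_def axM_def axC_def axN_def axCM_def axCC_def axCN_def
      MTop_def CTop_def split: if_splits)

theorem modal_all_interp_props:
  assumes "\<not> has_ID g"
  shows "all_interp_props mV MImp (mlogic (modal_axioms g))"
proof (rule ULIP_all_interp_props)
  show "ULIP mV MImp (mlogic (modal_axioms g))"
    using ULIP_modal_transfer[OF ULIP_CL modal_axioms_to_cond cond_axioms_to_modal[OF assms]] .
  show "MImp a c \<in> mlogic (modal_axioms g)"
    if "MImp a b \<in> mlogic (modal_axioms g)" "MImp b c \<in> mlogic (modal_axioms g)" for a b c
    using that by (intro mlogic_prop[of "{MImp a b, MImp b c}"]) auto
qed (auto intro: mlogic_prop[of "{}"] finite_mV)

theorem mainTheorem8:
  shows "(\<forall>L \<in> {logE, logM, logMC, logEN, logMN, logK}. all_interp_props mV MImp L) \<and>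
         (\<forall>L \<in> {logCE, logCM, logCMC, logCEN, logCMN, logCK, logCKID}. all_interp_props cV CImp L)"
  using modal_all_interp_props[of CE] modal_all_interp_props[of CM] modal_all_interp_props[of CMC]
    modal_all_interp_props[of CEN] modal_all_interp_props[of CMN] modal_all_interp_props[of CK]
    CL_all_interp_props[of CE] CL_all_interp_props[of CM] CL_all_interp_props[of CMC]
    CL_all_interp_props[of CEN] CL_all_interp_props[of CMN] CL_all_interp_props[of CK]
    CL_all_interp_props[of CKID]
  by (simp add: logE_def logM_def logMC_def logEN_def logMN_def logK_def modal_axioms_def
      logCE_def logCM_def logCMC_def logCEN_def logCMN_def logCK_def logCKID_def cond_axioms_def)

end
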